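(* Assume $s>1$ and $T_{s-1}=\delta>m_{s-1}>m_s\ge 2$. Put $\alpha=n_s/(\delta-m_s)$ (which equals $n_{s-1}/(\delta-m_{s-1})$). Then for every $(z,w)\in A_0\setminus E_w$ the limit $G_z(w)=\lim_{n\to\infty}\delta^{-n}\log|w_n|$ exists and $G_z(w)=\alpha G_p(z)$.
   Context: Let $f(z,w)=(p(z),q(z,w))$ be a holomorphic skew product defined on $\mathbb{C}^2$ or on $\{|z|<R\}\times\mathbb{C}$, where $R$ is so large that the attracting basin $A_p$ of $p$ at $0$ is relatively compact in $\{|z|<R\}$. Assume $p(z)=az^{\delta}+O(z^{\delta+1})$ with $a\neq 0$, $\delta\ge 2$, and $q(z,w)=\sum_{i,j\ge 0}b_{ij}z^iw^j$ with $b_{00}=b_{01}=0$ (both eigenvalues of $Df(0)$ vanish). The Newton polygon $N(q)$ is the convex hull of $\bigcup_{b_{ij}\neq 0}\{(x,y):x\ge i,\ y\ge j\}$; its vertices are $(n_1,m_1),\dots,(n_s,m_s)$ with $n_1<\dots<n_s$, $m_1>\dots>m_s$. For $1\le k\le s-1$, $T_k$ is the $y$-intercept of the line through $(n_k,m_k)$ and $(n_{k+1},m_{k+1})$. $A_0$ is the attracting basin of the origin for $f$ (points whose forward orbit converges to $(0,0)$); $E_w=\bigcup_{n\ge0}f^{-n}(\{w=0\})$. Write $(z_n,w_n)=f^n(z,w)$, and $G_p(z)=\lim_{n\to\infty}\delta^{-n}\log|p^n(z)|$ on $A_p$. *)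

theory Defs
  imports "HOL-Analysis.Analysis"
begin

definition skew :: "(complex \<Rightarrow> complex) \<Rightarrow> (complex \<Rightarrow> complex \<Rightarrow> complex)
    \<Rightarrow> complex \<times> complex \<Rightarrow> complex \<times> complex" where
  "skew p q = (\<lambda>(z, w). (p z, q z w))"

text \<open>Newton polygon of the coefficient family b (b i j is the coefficient of z^i w^j).\<close>
definition newton_polygon :: "(nat \<Rightarrow> nat \<Rightarrow> complex) \<Rightarrow> (real \<times> real) set" where
  "newton_polygon b = convex hull
     (\<Union>(i, j) \<in> {(i, j). b i j \<noteq> 0}. {(x, y). x \<ge> real i \<and> y \<ge> real j})"

definition newton_vertices :: "(nat \<Rightarrow> nat \<Rightarrow> complex) \<Rightarrow> (real \<times> real) set" where
  "newton_vertices b = {v. v extreme_point_of newton_polygon b}"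

definition y_intercept :: "real \<times> real \<Rightarrow> real \<times> real \<Rightarrow> real" where
  "y_intercept P Q = snd P - fst P * (snd Q - snd P) / (fst Q - fst P)"

definition basin_p :: "complex set \<Rightarrow> (complex \<Rightarrow> complex) \<Rightarrow> complex set" where
  "basin_p D p = {z \<in> D. (\<forall>n. (p ^^ n) z \<in> D) \<and> (\<lambda>n. (p ^^ n) z) \<longlonglongrightarrow> 0}"

definition basin0 :: "complex set \<Rightarrow> (complex \<Rightarrow> complex) \<Rightarrow> (complex \<Rightarrow> complex \<Rightarrow> complex)
    \<Rightarrow> (complex \<times> complex) set" where
  "basin0 D p q = {(z, w). z \<in> D \<and> (\<forall>n. fst ((skew p q ^^ n) (z, w)) \<in> D)
       \<and> (\<lambda>n. (skew p q ^^ n) (z, w)) \<longlonglongrightarrow> (0, 0)}"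

definition Ew :: "complex set \<Rightarrow> (complex \<Rightarrow> complex) \<Rightarrow> (complex \<Rightarrow> complex \<Rightarrow> complex)
    \<Rightarrow> (complex \<times> complex) set" where
  "Ew D p q = {(z, w). z \<in> D \<and> (\<exists>n. (\<forall>k\<le>n. fst ((skew p q ^^ k) (z, w)) \<in> D)
       \<and> snd ((skew p q ^^ n) (z, w)) = 0)}"

definition elog :: "real \<Rightarrow> ereal" where
  "elog x = (if x = 0 then -\<infinity> else ereal (ln x))"

definition green_p :: "(complex \<Rightarrow> complex) \<Rightarrow> nat \<Rightarrow> complex \<Rightarrow> ereal" where
  "green_p p \<delta> z = lim (\<lambda>n. elog (cmod ((p ^^ n) z)) / ereal (real \<delta> ^ n))"

end

theory Submission
  imports Defs
begin

text \<open>In the logarithmic coordinates \<open>X n = log |z_n|\<close>, \<open>Y n = log |w_n|\<close> the dynamics near the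
  origin is piecewise linear: \<open>X (n+1) = \<delta> X n + O(1)\<close>, and up to \<open>O(1)\<close> the value \<open>Y (n+1)\<close> is at
  most the maximum of \<open>i X n + j Y n\<close> over the support of \<open>q\<close>. Convexity of the Newton polygon and
  integrality reduce this maximum to the two vertices of the last edge and a pure power
  \<open>w^\<delta>'\<close> with \<open>\<delta>' > \<delta>\<close>; once \<open>X\<close> and \<open>Y - \<alpha> X\<close> are very negative, the monomial of the last
  vertex alone dominates and gives the matching lower bound. Hence \<open>X n / \<delta>^n\<close> tends to
  \<open>G_p(z) < 0\<close>, while \<open>U = Y - \<alpha> X\<close> obeys affine recursions with multipliers \<open>m_s < m_(s-1) < \<delta>\<close>
  up to an exponentially negative error, so that \<open>U n / \<delta>^n \<longrightarrow> 0\<close>. If \<open>z_n\<close> reaches \<open>0\<close>, only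
  pure powers \<open>w^j\<close> with \<open>j > \<delta>\<close> survive and both sides are \<open>-\<infinity>\<close>.\<close>

section \<open>Geometry of the Newton polygon\<close>

lemma newton_polygon_support: "b i j \<noteq> 0 \<Longrightarrow> (real i, real j) \<in> newton_polygon b"
  unfolding newton_polygon_def by (rule hull_subset[THEN subsetD]) auto

lemma newton_polygon_translate_nonneg:
  assumes "x \<in> newton_polygon b" "0 \<le> v1" "0 \<le> v2"
  shows "(v1, v2) + x \<in> newton_polygon b"
proof -
  let ?S = "\<Union>(i, j) \<in> {(i, j). b i j \<noteq> 0}. {(x, y). x \<ge> real i \<and> y \<ge> real j}"
  have "(v1, v2) + x \<in> (\<lambda>x. (v1, v2) + x) ` (convex hull ?S)"
    using assms(1) unfolding newton_polygon_def by blast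
  also have "\<dots> = convex hull ((\<lambda>x. (v1, v2) + x) ` ?S)"
    by (rule convex_hull_translation[symmetric])
  also have "\<dots> \<subseteq> convex hull ?S"
    using assms(2,3) by (intro hull_mono) auto
  finally show ?thesis unfolding newton_polygon_def .
qed

lemma extreme_point_newton_polygon_minimal:
  assumes P: "P extreme_point_of newton_polygon b" and Q: "Q \<in> newton_polygon b"
    and "fst Q \<le> fst P" "snd Q \<le> snd P"
  shows "Q = P"
proof (rule ccontr)
  assume "Q \<noteq> P"
  define R where "R = (2 * (fst P - fst Q), 2 * (snd P - snd Q)) + Q"
  have R: "R \<in> newton_polygon b"
    unfolding R_def using assms(3,4) by (intro newton_polygon_translate_nonneg[OF Q]) auto
  have "midpoint Q R = P"
    by (simp add: R_def midpoint_def prod_eq_iff algebra_simps)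
  moreover have "Q \<noteq> R"
    using \<open>Q \<noteq> P\<close> by (auto simp: R_def prod_eq_iff)
  ultimately have "P \<in> open_segment Q R"
    using midpoint_in_open_segment by metis
  then show False using P Q R unfolding extreme_point_of_def by blast
qed

lemma extreme_point_newton_polygon_support:
  assumes "P extreme_point_of newton_polygon b"
  obtains i j where "b i j \<noteq> 0" "P = (real i, real j)"
proof -
  have "P \<in> (\<Union>(i, j) \<in> {(i, j). b i j \<noteq> 0}. {(x, y). x \<ge> real i \<and> y \<ge> real j})"
    using extreme_point_of_convex_hull assms unfolding newton_polygon_def by blast
  then obtain i j where ij: "b i j \<noteq> 0" "real i \<le> fst P" "real j \<le> snd P"
    by auto
  have "(real i, real j) = P"
    using ij by (intro extreme_point_newton_polygon_minimal[OF assms newton_polygon_support]) auto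
  then show ?thesis using that ij(1) by blast
qed

lemma lex_ge_convex_combination:
  fixes a b c d f0 g0 u :: real
  assumes "f0 < a \<or> a = f0 \<and> g0 \<le> c" "f0 < b \<or> b = f0 \<and> g0 \<le> d" "0 \<le> u" "u \<le> 1"
  shows "f0 < (1 - u) * a + u * b \<or> (1 - u) * a + u * b = f0 \<and> g0 \<le> (1 - u) * c + u * d"
proof -
  have f: "(1 - u) * a + u * b - f0 = (1 - u) * (a - f0) + u * (b - f0)"
    and g: "(1 - u) * c + u * d - g0 = (1 - u) * (c - g0) + u * (d - g0)"
    by (simp_all add: algebra_simps)
  have "0 \<le> (1 - u) * (a - f0)" "0 \<le> u * (b - f0)"
    using assms by auto
  moreover have "0 < (1 - u) * (a - f0) \<or> 0 < u * (b - f0) \<or>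
      (1 - u) * (a - f0) = 0 \<and> u * (b - f0) = 0 \<and> 0 \<le> (1 - u) * (c - g0) \<and> 0 \<le> u * (d - g0)"
    using assms by (cases "u = 0"; cases "u = 1") auto
  ultimately show ?thesis using f g by linarith
qed

lemma lex_ge_convex_combination_eq:
  fixes a b c d f0 g0 u :: real
  assumes "f0 < a \<or> a = f0 \<and> g0 \<le> c" "f0 < b \<or> b = f0 \<and> g0 \<le> d" "0 < u" "u < 1"
    and "(1 - u) * a + u * b = f0" "(1 - u) * c + u * d = g0"
  shows "a = f0 \<and> b = f0 \<and> c = g0 \<and> d = g0"
proof -
  have f: "(1 - u) * (a - f0) + u * (b - f0) = 0" and g: "(1 - u) * (c - g0) + u * (d - g0) = 0"
    using assms(5,6) by (simp_all add: algebra_simps)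
  have "0 \<le> (1 - u) * (a - f0)" "0 \<le> u * (b - f0)"
    using assms by auto
  with f have "(1 - u) * (a - f0) = 0" "u * (b - f0) = 0"
    by linarith+
  with assms(3,4) have "a = f0" "b = f0"
    by simp_all
  with assms have "0 \<le> (1 - u) * (c - g0)" "0 \<le> u * (d - g0)"
    by auto
  with g have "(1 - u) * (c - g0) = 0" "u * (d - g0) = 0"
    by linarith+
  with assms(3,4) have "c = g0" "d = g0"
    by simp_all
  with \<open>a = f0\<close> \<open>b = f0\<close> show ?thesis by simp
qed

lemma convex_lex_halfplane:
  fixes f g :: "'a::real_vector \<Rightarrow> real"
  assumes "linear f" "linear g"
  shows "convex {p. f0 < f p \<or> f p = f0 \<and> g0 \<le> g p}"
proof -
  let ?S = "{p. f0 < f p \<or> f p = f0 \<and> g0 \<le> g p}"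
  have "(1 - u) *\<^sub>R p + u *\<^sub>R q \<in> ?S" if "p \<in> ?S" "q \<in> ?S" "0 \<le> u" "u \<le> 1" for p q u
  proof -
    have "f0 < (1 - u) * f p + u * f q \<or> (1 - u) * f p + u * f q = f0 \<and> g0 \<le> (1 - u) * g p + u * g q"
      using that by (intro lex_ge_convex_combination) auto
    then show ?thesis
      using assms by (simp add: linear_iff)
  qed
  then show ?thesis
    unfolding convex_alt by blast
qed

text \<open>The Newton polygon lies in the convex lexicographic half-plane determined by the minimiser.\<close>
lemma newton_polygon_lex_min_extreme:
  fixes wx wy :: real
  assumes b0: "b i0 j0 \<noteq> 0" and c: "0 \<le> wx" "0 < wy"
    and lexmin: "\<And>i j. b i j \<noteq> 0 \<Longrightarrow> wx * i0 + wy * j0 < wx * i + wy * j \<or>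
                   wx * i + wy * j = wx * i0 + wy * j0 \<and> i0 \<le> i"
  shows "(real i0, real j0) extreme_point_of newton_polygon b"
proof -
  define x0 where "x0 = (real i0, real j0)"
  define f where "f p = wx * fst p + wy * snd p" for p :: "real \<times> real"
  define H where "H = {p. f x0 < f p \<or> f p = f x0 \<and> fst x0 \<le> fst p}"
  have f_comb: "f ((1 - u) *\<^sub>R p + u *\<^sub>R q) = (1 - u) * f p + u * f q" for u p q
    unfolding f_def by (simp add: algebra_simps)
  have "linear f"
    unfolding f_def by (auto simp: linear_iff algebra_simps)
  then have "convex H"
    unfolding H_def by (rule convex_lex_halfplane[OF _ linear_fst])
  moreover have "(\<Union>(i, j) \<in> {(i, j). b i j \<noteq> 0}. {(x, y). x \<ge> real i \<and> y \<ge> real j}) \<subseteq> H"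
  proof safe
    fix i j x y assume bij: "b i j \<noteq> 0" and xy: "x \<ge> real i" "y \<ge> real j"
    have "f (real i, real j) \<le> f (x, y)"
      using xy c unfolding f_def by (simp add: add_mono mult_left_mono)
    moreover have "f x0 < f (real i, real j) \<or> f (real i, real j) = f x0 \<and> fst x0 \<le> real i"
      using lexmin[OF bij] unfolding f_def x0_def by simp
    ultimately show "(x, y) \<in> H"
      using xy unfolding H_def by auto
  qed
  ultimately have NP_H: "newton_polygon b \<subseteq> H"
    unfolding newton_polygon_def by (rule hull_minimal[rotated])
  show ?thesis
    unfolding extreme_point_of_def x0_def[symmetric]
  proof (intro conjI ballI notI)
    show "x0 \<in> newton_polygon b"
      unfolding x0_def by (rule newton_polygon_support[of b, OF b0])
    fix p q assume "p \<in> newton_polygon b" "q \<in> newton_polygon b" "x0 \<in> open_segment p q"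
    then obtain u where "p \<noteq> q" "0 < u" "u < 1" and pq: "x0 = (1 - u) *\<^sub>R p + u *\<^sub>R q"
      and H: "p \<in> H" "q \<in> H"
      using NP_H unfolding in_segment by blast
    have "f x0 = (1 - u) * f p + u * f q" "fst x0 = (1 - u) * fst p + u * fst q"
      using f_comb pq by simp_all
    then have "f p = f x0 \<and> f q = f x0 \<and> fst p = fst x0 \<and> fst q = fst x0"
      using H \<open>0 < u\<close> \<open>u < 1\<close> by (intro lex_ge_convex_combination_eq) (auto simp: H_def)
    then have "p = x0" "q = x0"
      using c unfolding f_def by (auto simp: prod_eq_iff)
    then show False using \<open>p \<noteq> q\<close> by simp
  qed
qed

lemma newton_polygon_min_at_extreme_point:
  fixes wx wy :: nat
  assumes "b i j \<noteq> 0" "0 < wy"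
  obtains i0 j0 where "(real i0, real j0) extreme_point_of newton_polygon b"
    "\<And>i j. b i j \<noteq> 0 \<Longrightarrow> wx * i0 + wy * j0 \<le> wx * i + wy * j"
proof -
  let ?S = "{(i, j). b i j \<noteq> 0}"
  have "(i, j) \<in> ?S" using assms(1) by simp
  then obtain ij0 where "ij0 \<in> ?S"
    and min: "\<And>ij. (ij, ij0) \<in> measures [\<lambda>(i, j). wx * i + wy * j, fst] \<Longrightarrow> ij \<notin> ?S"
    by (rule wfE_min[OF wf_measures]) blast
  then obtain i0 j0 where ij0: "ij0 = (i0, j0)" "b i0 j0 \<noteq> 0" by auto
  have le: "wx * i0 + wy * j0 < wx * i + wy * j \<or> wx * i + wy * j = wx * i0 + wy * j0 \<and> i0 \<le> i"
    if "b i j \<noteq> 0" for i j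
  proof -
    have "\<not> (wx * i + wy * j < wx * i0 + wy * j0 \<or> wx * i + wy * j = wx * i0 + wy * j0 \<and> i < i0)"
      using min[of "(i, j)"] that unfolding ij0 by auto
    then show ?thesis by arith
  qed
  have "(real i0, real j0) extreme_point_of newton_polygon b"
  proof (rule newton_polygon_lex_min_extreme[of b, OF ij0(2)])
    fix i j assume "b i j \<noteq> 0"
    from le[OF this] have "real (wx * i0 + wy * j0) < real (wx * i + wy * j) \<or>
        real (wx * i + wy * j) = real (wx * i0 + wy * j0) \<and> real i0 \<le> real i"
      by (simp only: of_nat_less_iff of_nat_eq_iff of_nat_le_iff)
    then show "real wx * i0 + real wy * j0 < real wx * i + real wy * j \<or>
        real wx * i + real wy * j = real wx * i0 + real wy * j0 \<and> i0 \<le> i"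
      by simp
  qed (use assms in auto)
  then show ?thesis
  proof (rule that)
    fix i j assume "b i j \<noteq> 0"
    then show "wx * i0 + wy * j0 \<le> wx * i + wy * j" using le by fastforce
  qed
qed

section \<open>The last edge of the Newton polygon\<close>

lemma linear_le_max_above_segment:
  fixes X Y t x y x1 y1 x2 y2 :: real
  assumes "X \<le> 0" "Y \<le> 0" "0 \<le> t" "t \<le> 1"
    and "t * x1 + (1 - t) * x2 \<le> x" "t * y1 + (1 - t) * y2 \<le> y"
  shows "x * X + y * Y \<le> max (x1 * X + y1 * Y) (x2 * X + y2 * Y)"
proof -
  have "x * X + y * Y \<le> (t * x1 + (1 - t) * x2) * X + (t * y1 + (1 - t) * y2) * Y"
    using assms by (intro add_mono mult_right_mono_neg)
  also have "\<dots> = t * (x1 * X + y1 * Y) + (1 - t) * (x2 * X + y2 * Y)"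
    by (simp add: algebra_simps)
  also have "\<dots> \<le> t * max (x1 * X + y1 * Y) (x2 * X + y2 * Y) + (1 - t) * max (x1 * X + y1 * Y) (x2 * X + y2 * Y)"
    using assms(3,4) by (intro add_mono mult_left_mono) auto
  also have "\<dots> = max (x1 * X + y1 * Y) (x2 * X + y2 * Y)"
    by (simp add: algebra_simps)
  finally show ?thesis .
qed

locale newton_last_edge =
  fixes b :: "nat \<Rightarrow> nat \<Rightarrow> complex" and \<delta> s :: nat and nv mv :: "nat \<Rightarrow> nat"
  assumes s_gt: "s > 1"
    and vert: "newton_vertices b = (\<lambda>k. (real (nv k), real (mv k))) ` {1..s}"
    and nv_mono: "strict_mono_on {1..s} nv"
    and T_eq: "y_intercept (real (nv (s - 1)), real (mv (s - 1))) (real (nv s), real (mv s)) = real \<delta>"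
    and m1: "real \<delta> > real (mv (s - 1))" and m2: "mv (s - 1) > mv s" and m3: "mv s \<ge> 2"
begin

abbreviation "n_prev \<equiv> nv (s - 1)"
abbreviation "m_prev \<equiv> mv (s - 1)"
abbreviation "n_last \<equiv> nv s"
abbreviation "m_last \<equiv> mv s"

definition edge_form :: "nat \<Rightarrow> nat \<Rightarrow> nat" where
  "edge_form i j = (\<delta> - m_last) * i + n_last * j"

lemma vertex_extreme: "k \<in> {1..s} \<Longrightarrow> (real (nv k), real (mv k)) extreme_point_of newton_polygon b"
  using vert unfolding newton_vertices_def by blast

lemma extreme_point_is_vertex:
  "x extreme_point_of newton_polygon b \<Longrightarrow> \<exists>k\<in>{1..s}. x = (real (nv k), real (mv k))"
  using vert unfolding newton_vertices_def by blast

lemma vertex_in_newton_polygon: "k \<in> {1..s} \<Longrightarrow> (real (nv k), real (mv k)) \<in> newton_polygon b"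
  using vertex_extreme extreme_point_of_def by blast

lemma last_in_range: "s \<in> {1..s}" "s - 1 \<in> {1..s}"
  using s_gt by auto

lemma nv_less_last: "k \<in> {1..s} \<Longrightarrow> k < s \<Longrightarrow> nv k < n_last"
  using nv_mono s_gt unfolding strict_mono_on_def by auto

lemma nv_less_prev: "k \<in> {1..s} \<Longrightarrow> k < s - 1 \<Longrightarrow> nv k < n_prev"
  using nv_mono s_gt unfolding strict_mono_on_def by auto

lemma n_prev_less_last: "n_prev < n_last"
  using nv_less_last[OF last_in_range(2)] s_gt by simp

lemma m_less_delta: "m_last < \<delta>" "m_prev < \<delta>"
  using m1 m2 by auto

lemma last_edge_eq: "real n_prev * (real \<delta> - real m_last) = real n_last * (real \<delta> - real m_prev)"
proof -
  have "real n_last - real n_prev \<noteq> 0"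
    using n_prev_less_last by simp
  moreover have "real m_prev - real n_prev * (real m_last - real m_prev) / (real n_last - real n_prev) = real \<delta>"
    using T_eq unfolding y_intercept_def by simp
  ultimately show ?thesis
    by (simp add: field_simps)
qed

lemma edge_form_real:
  "real (edge_form i j) = (real \<delta> - real m_last) * real i + real n_last * real j"
  unfolding edge_form_def using m_less_delta by simp

lemma edge_form_last: "edge_form n_last m_last = n_last * \<delta>"
  using m_less_delta unfolding edge_form_def by (simp add: algebra_simps)

lemma edge_form_prev: "edge_form n_prev m_prev = n_last * \<delta>"
proof -
  have "real (edge_form n_prev m_prev) = real (n_last * \<delta>)"
    unfolding edge_form_real using last_edge_eq by (simp add: algebra_simps)
  then show ?thesis by (simp only: of_nat_eq_iff)
qed

lemma n_prev_pos: "0 < n_prev"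
proof -
  have "0 < real n_last * (real \<delta> - real m_prev)"
    using n_prev_less_last m1 by simp
  then show ?thesis using last_edge_eq by (cases "n_prev = 0") auto
qed

lemma coeff_last_vertex_nonzero: "b n_last m_last \<noteq> 0"
  using extreme_point_newton_polygon_support[OF vertex_extreme[OF last_in_range(1)]] by auto

lemma vertex_snd_ge_last:
  assumes k: "k \<in> {1..s}"
  shows "m_last \<le> mv k"
proof (rule ccontr)
  assume "\<not> m_last \<le> mv k"
  then have "k \<noteq> s" "mv k < m_last" by auto
  then have "nv k < n_last" using nv_less_last k by simp
  then have "(real (nv k), real (mv k)) = (real n_last, real m_last)"
    using \<open>mv k < m_last\<close>
    by (intro extreme_point_newton_polygon_minimal[OF vertex_extreme vertex_in_newton_polygon[OF k]])
       (use s_gt in \<open>auto simp: last_in_range\<close>)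
  then show False using \<open>mv k < m_last\<close> by simp
qed

text \<open>Otherwise the point of the segment to the last vertex with abscissa \<open>n_prev\<close> would lie
  strictly below the vertex \<open>(n_prev, m_prev)\<close>.\<close>
lemma vertex_left_above_last_edge:
  assumes k: "k \<in> {1..s}" "k < s - 1"
  shows "n_last * \<delta> \<le> edge_form (nv k) (mv k)"
proof (rule ccontr)
  define \<psi> where "\<psi> p = (real \<delta> - real m_last) * fst p + real n_last * snd p" for p :: "real \<times> real"
  define P where "P = (real (nv k), real (mv k))"
  define t where "t = (real n_prev - real (nv k)) / (real n_last - real (nv k))"
  define Q where "Q = (1 - t) *\<^sub>R P + t *\<^sub>R (real n_last, real m_last)"
  assume "\<not> ?thesis"
  then have "real (edge_form (nv k) (mv k)) < real (n_last * \<delta>)"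
    by (simp only: not_le of_nat_less_iff)
  then have "\<psi> P < real n_last * real \<delta>"
    unfolding edge_form_real \<psi>_def P_def by simp
  have "nv k < n_prev" using nv_less_prev k by simp
  then have t: "0 < t" "t < 1" "t * (real n_last - real (nv k)) = real n_prev - real (nv k)"
    using n_prev_less_last unfolding t_def by (auto simp: field_simps)
  have "Q \<in> newton_polygon b"
    unfolding Q_def P_def
    by (intro convexD_alt vertex_in_newton_polygon k last_in_range)
       (use t in \<open>auto simp: newton_polygon_def\<close>)
  have "\<psi> Q = (1 - t) * \<psi> P + t * (real n_last * real \<delta>)"
    unfolding Q_def \<psi>_def by (simp add: algebra_simps)
  also have "\<dots> < real n_last * real \<delta>"
  proof -
    have "(1 - t) * \<psi> P < (1 - t) * (real n_last * real \<delta>)"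
      using \<open>\<psi> P < _\<close> t by (intro mult_strict_left_mono) auto
    then show ?thesis by (simp add: algebra_simps)
  qed
  also have "\<dots> = \<psi> (real n_prev, real m_prev)"
    using last_edge_eq unfolding \<psi>_def by (simp add: algebra_simps)
  finally have "\<psi> Q < \<psi> (real n_prev, real m_prev)" .
  moreover have fQ: "fst Q = real n_prev"
    using t unfolding Q_def P_def by (simp add: algebra_simps)
  ultimately have "snd Q < real m_prev"
    unfolding \<psi>_def using n_prev_less_last by simp
  moreover have "Q = (real n_prev, real m_prev)"
    using fQ \<open>snd Q < _\<close>
    by (intro extreme_point_newton_polygon_minimal[OF vertex_extreme \<open>Q \<in> _\<close>] last_in_range) auto
  ultimately show False by simp
qed

lemma vertex_above_last_edge:
  assumes k: "k \<in> {1..s}"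
  shows "n_last * \<delta> \<le> edge_form (nv k) (mv k)"
proof -
  consider "k = s" | "k = s - 1" | "k < s - 1" using k by fastforce
  then show ?thesis
    by cases (simp_all only: edge_form_last edge_form_prev order_refl vertex_left_above_last_edge[OF k])
qed

lemma support_snd_ge_last:
  assumes "b i j \<noteq> 0"
  shows "m_last \<le> j"
proof -
  obtain i0 j0 where "(real i0, real j0) extreme_point_of newton_polygon b"
    and min: "\<And>i j. b i j \<noteq> 0 \<Longrightarrow> 0 * i0 + 1 * j0 \<le> 0 * i + 1 * j"
    by (rule newton_polygon_min_at_extreme_point[where b = b and wx = 0 and wy = 1, OF assms]) auto
  then obtain k where "k \<in> {1..s}" "j0 = mv k"
    using extreme_point_is_vertex by fastforce
  then show ?thesis
    using vertex_snd_ge_last min[OF assms] by fastforce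
qed

lemma support_above_last_edge:
  assumes "b i j \<noteq> 0"
  shows "n_last * \<delta> \<le> edge_form i j"
proof -
  obtain i0 j0 where "(real i0, real j0) extreme_point_of newton_polygon b"
    and min: "\<And>i j. b i j \<noteq> 0 \<Longrightarrow> edge_form i0 j0 \<le> edge_form i j"
    unfolding edge_form_def
    by (rule newton_polygon_min_at_extreme_point[where b = b and wx = "\<delta> - m_last" and wy = n_last,
          OF assms]) (use n_prev_less_last in auto)
  then obtain k where "k \<in> {1..s}" "i0 = nv k" "j0 = mv k"
    using extreme_point_is_vertex by fastforce
  then show ?thesis
    using vertex_above_last_edge min[OF assms] by fastforce
qed

text \<open>Above height \<open>m_prev\<close> no support point lies on the line of the last edge, since
  \<open>(n_prev, m_prev)\<close> would then be interior to a segment of the Newton polygon.\<close>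
lemma support_strictly_above_last_edge:
  assumes bij: "b i j \<noteq> 0" and jm: "m_prev < j"
  shows "n_last * \<delta> < edge_form i j"
proof (rule ccontr)
  define \<psi> where "\<psi> p = (real \<delta> - real m_last) * fst p + real n_last * snd p" for p :: "real \<times> real"
  define u where "u = (real j - real m_prev) / (real j - real m_last)"
  define Q where "Q = (1 - u) *\<^sub>R (real i, real j) + u *\<^sub>R (real n_last, real m_last)"
  assume "\<not> ?thesis"
  then have "edge_form i j = n_last * \<delta>"
    using support_above_last_edge[OF bij] by simp
  then have on_line: "\<psi> (real i, real j) = real n_last * real \<delta>"
    using edge_form_real[of i j] unfolding \<psi>_def by simp
  have u: "0 < u" "u < 1" "u * (real j - real m_last) = real j - real m_prev"
    unfolding u_def using jm m2 by (auto simp: field_simps)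
  have sQ: "snd Q = real m_prev"
    using u(3) unfolding Q_def by (simp add: algebra_simps)
  have "\<psi> Q = (1 - u) * \<psi> (real i, real j) + u * \<psi> (real n_last, real m_last)"
    unfolding Q_def \<psi>_def by (simp add: algebra_simps)
  also have "\<dots> = real n_last * real \<delta>"
    using on_line unfolding \<psi>_def by (simp add: algebra_simps)
  finally have "\<psi> Q = real n_last * real \<delta>" .
  then have "(real \<delta> - real m_last) * fst Q = (real \<delta> - real m_last) * real n_prev"
    using sQ last_edge_eq unfolding \<psi>_def by (simp add: algebra_simps)
  then have "fst Q = real n_prev"
    using m_less_delta by simp
  then have "(real n_prev, real m_prev) \<in> open_segment (real i, real j) (real n_last, real m_last)"
    unfolding in_segment using jm m2 u sQ unfolding Q_def by (auto simp: prod_eq_iff)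
  then show False
    using vertex_extreme[OF last_in_range(2)] newton_polygon_support[of b, OF bij]
      vertex_in_newton_polygon[OF last_in_range(1)]
    unfolding extreme_point_of_def by blast
qed

definition \<alpha> :: real where
  "\<alpha> = real n_last / (real \<delta> - real m_last)"

text \<open>\<open>\<delta>'\<close> comes from integrality: a support point above height \<open>m_prev\<close> has
  \<open>edge_form i j \<ge> n_last * \<delta> + 1\<close>.\<close>
definition \<delta>' :: real where
  "\<delta>' = real \<delta> + 1 / real n_last"

lemma alpha_pos: "0 < \<alpha>"
  unfolding \<alpha>_def using n_prev_less_last m_less_delta by simp

lemma n_last_eq_alpha: "real n_last = \<alpha> * (real \<delta> - real m_last)"
  unfolding \<alpha>_def using m_less_delta by simp

lemma n_prev_eq_alpha: "real n_prev = \<alpha> * (real \<delta> - real m_prev)"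
  unfolding \<alpha>_def using m_less_delta last_edge_eq by (simp add: field_simps)

lemma delta_less_delta': "real \<delta> < \<delta>'"
  unfolding \<delta>'_def using n_prev_less_last by simp

lemma support_above_last_edge_alpha:
  assumes "b i j \<noteq> 0"
  shows "\<alpha> * (real \<delta> - real j) \<le> real i"
proof -
  have "real (n_last * \<delta>) \<le> real (edge_form i j)"
    using support_above_last_edge[OF assms] by (simp only: of_nat_le_iff)
  then have "real n_last * real \<delta> \<le> (real \<delta> - real m_last) * real i + real n_last * real j"
    unfolding edge_form_real by simp
  then have "(real \<delta> - real m_last) * (\<alpha> * (real \<delta> - real j)) \<le> (real \<delta> - real m_last) * real i"
    unfolding n_last_eq_alpha by (simp add: algebra_simps)
  then show ?thesis using m_less_delta by simp
qed

lemma support_strictly_above_last_edge_alpha: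
  assumes "b i j \<noteq> 0" "m_prev < j"
  shows "\<alpha> * (\<delta>' - real j) \<le> real i"
proof -
  have "real (Suc (n_last * \<delta>)) \<le> real (edge_form i j)"
    using support_strictly_above_last_edge[OF assms] by (simp only: Suc_le_eq of_nat_le_iff)
  then have "real n_last * real \<delta> + 1 \<le> (real \<delta> - real m_last) * real i + real n_last * real j"
    unfolding edge_form_real by simp
  moreover have "real n_last * \<delta>' = real n_last * real \<delta> + 1"
    unfolding \<delta>'_def using n_prev_less_last by (simp add: field_simps)
  ultimately have "(real \<delta> - real m_last) * (\<alpha> * (\<delta>' - real j)) \<le> (real \<delta> - real m_last) * real i"
    by (simp add: n_last_eq_alpha algebra_simps)
  then show ?thesis using m_less_delta by simp
qed

lemma support_tropical_upper:
  fixes X Y :: real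
  assumes bij: "b i j \<noteq> 0" and X: "X \<le> 0" and Y: "Y \<le> 0"
  shows "real i * X + real j * Y \<le>
    max (real n_last * X + real m_last * Y) (max (real n_prev * X + real m_prev * Y) (\<delta>' * Y))"
proof (cases "j \<le> m_prev")
  case True
  define t where "t = (real m_prev - real j) / (real m_prev - real m_last)"
  have t: "0 \<le> t" "t \<le> 1" "t * (real m_prev - real m_last) = real m_prev - real j"
    using True support_snd_ge_last[OF bij] m2 unfolding t_def by (auto simp: field_simps)
  then have t_comb: "t * real m_last + (1 - t) * real m_prev = real j"
    by (simp add: algebra_simps)
  have "t * real n_last + (1 - t) * real n_prev = \<alpha> * (real \<delta> - real j)"
    unfolding n_last_eq_alpha n_prev_eq_alpha t_comb[symmetric] by (simp add: algebra_simps)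
  then have "real i * X + real j * Y \<le> max (real n_last * X + real m_last * Y) (real n_prev * X + real m_prev * Y)"
    using support_above_last_edge_alpha[OF bij] t t_comb X Y by (intro linear_le_max_above_segment) auto
  then show ?thesis by (auto simp: le_max_iff_disj)
next
  case False
  show ?thesis
  proof (cases "\<delta>' \<le> real j")
    case True
    have "real i * X \<le> 0" "real j * Y \<le> \<delta>' * Y"
      using X Y True by (auto intro: mult_nonneg_nonpos mult_right_mono_neg)
    then show ?thesis by (auto simp: le_max_iff_disj)
  next
    case j: False
    define t where "t = (\<delta>' - real j) / (\<delta>' - real m_prev)"
    have t: "0 \<le> t" "t \<le> 1" "t * (\<delta>' - real m_prev) = \<delta>' - real j"
      using False j unfolding t_def by (auto simp: field_simps)
    then have t_comb: "t * real m_prev + (1 - t) * \<delta>' = real j"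
      by (simp add: algebra_simps)
    have "t * (real \<delta> - real m_prev) \<le> t * (\<delta>' - real m_prev)"
      using t(1) delta_less_delta' by (intro mult_left_mono) auto
    then have "\<alpha> * (t * (real \<delta> - real m_prev)) \<le> \<alpha> * (t * (\<delta>' - real m_prev))"
      by (rule mult_left_mono) (use alpha_pos in simp)
    then have "t * real n_prev \<le> \<alpha> * (t * (\<delta>' - real m_prev))"
      unfolding n_prev_eq_alpha by (simp only: ac_simps)
    also have "\<dots> = \<alpha> * (\<delta>' - real j)"
      unfolding t(3) by simp
    finally have "real i * X + real j * Y \<le> max (real n_prev * X + real m_prev * Y) (0 * X + \<delta>' * Y)"
      using support_strictly_above_last_edge_alpha[OF bij] False t t_comb X Y
      by (intro linear_le_max_above_segment) auto
    then show ?thesis by (auto simp: le_max_iff_disj)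
  qed
qed

lemma support_dominated_by_last_vertex:
  fixes X Y :: real
  assumes bij: "b i j \<noteq> 0" and ne: "(i, j) \<noteq> (n_last, m_last)"
    and X: "X \<le> 0" and U: "Y - \<alpha> * X \<le> 0"
  shows "real i * X + real j * Y \<le> real n_last * X + real m_last * Y + max X (Y - \<alpha> * X)"
proof (cases "j = m_last")
  case True
  then have "n_last \<le> i"
    using support_above_last_edge_alpha[OF bij] m_less_delta n_last_eq_alpha by simp
  then have "real n_last + 1 \<le> real i" using ne True by auto
  then have "real i * X \<le> (real n_last + 1) * X" using X by (rule mult_right_mono_neg)
  then show ?thesis using True by (simp add: algebra_simps)
next
  case False
  then have j: "real m_last + 1 \<le> real j" using support_snd_ge_last[OF bij] by simp
  have "(real i + \<alpha> * real j) * X \<le> (\<alpha> * real \<delta>) * X"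
    using support_above_last_edge_alpha[OF bij] X by (intro mult_right_mono_neg) (simp add: algebra_simps)
  moreover have "real j * (Y - \<alpha> * X) \<le> (real m_last + 1) * (Y - \<alpha> * X)"
    using j U by (rule mult_right_mono_neg)
  ultimately have "real i * X + real j * Y \<le> real n_last * X + real m_last * Y + (Y - \<alpha> * X)"
    unfolding n_last_eq_alpha by (simp add: algebra_simps)
  then show ?thesis by auto
qed

lemma support_on_w_axis:
  assumes "b 0 j \<noteq> 0"
  shows "\<delta> + 1 \<le> j"
proof -
  have "n_last * \<delta> \<le> n_last * j"
    using support_above_last_edge[OF assms] unfolding edge_form_def by simp
  then have "m_prev < j"
    using n_prev_less_last m_less_delta by simp
  then have "n_last * \<delta> < n_last * j"
    using support_strictly_above_last_edge[OF assms] unfolding edge_form_def by simp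
  then show ?thesis by simp
qed

end

section \<open>Real sequences with affine recursive bounds\<close>

lemma realpow_tendsto_at_top:
  fixes x :: real
  assumes "1 < x"
  shows "filterlim (\<lambda>n. x ^ n) at_top sequentially"
proof -
  have "filterlim (\<lambda>n. norm (x ^ n)) at_top sequentially"
    using filterlim_realpow_sequentially_gt1[of x] assms
    by (simp add: filterlim_at_infinity_conv_norm_at_top)
  moreover have "norm (x ^ n) = x ^ n" for n
    using assms by (simp add: norm_power)
  ultimately show ?thesis by simp
qed

lemma eventually_realpow_ge:
  fixes x :: real
  assumes "1 < x"
  obtains N where "\<And>n. N \<le> n \<Longrightarrow> B \<le> x ^ n"
  using realpow_tendsto_at_top[OF assms] unfolding filterlim_at_top eventually_sequentially by blast

lemma affine_recursion_upper:
  fixes Y :: "nat \<Rightarrow> real"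
  assumes step: "\<And>n. N \<le> n \<Longrightarrow> Y (Suc n) \<le> C + r * Y n" and r: "1 < r"
  shows "Y (N + k) + C / (r - 1) \<le> r ^ k * (Y N + C / (r - 1))"
proof (induction k)
  case (Suc k)
  have "Y (N + Suc k) + C / (r - 1) \<le> C + r * Y (N + k) + C / (r - 1)"
    using step[of "N + k"] by simp
  also have "\<dots> = r * (Y (N + k) + C / (r - 1))"
    using r by (simp add: field_simps)
  also have "\<dots> \<le> r * (r ^ k * (Y N + C / (r - 1)))"
    using Suc r by (intro mult_left_mono) auto
  finally show ?case by simp
qed simp

lemma affine_recursion_lower:
  fixes Y :: "nat \<Rightarrow> real"
  assumes step: "\<And>n. N \<le> n \<Longrightarrow> r * Y n - C \<le> Y (Suc n)" and r: "1 < r"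
  shows "r ^ k * (Y N - C / (r - 1)) \<le> Y (N + k) - C / (r - 1)"
  using affine_recursion_upper[of N "\<lambda>n. - Y n" C r k] step r by (force simp: algebra_simps)

lemma affine_recursion_below_exponential:
  fixes Y :: "nat \<Rightarrow> real"
  assumes step: "\<And>n. N \<le> n \<Longrightarrow> Y (Suc n) \<le> C + r * Y n" and r: "1 < r"
    and Y: "filterlim Y at_bot sequentially"
  obtains M where "\<And>k. Y (M + k) \<le> - (r ^ k)"
proof -
  define K where "K = \<bar>C\<bar> / (r - 1)"
  have K: "0 \<le> K" using r by (simp add: K_def)
  obtain M0 where M0: "\<And>n. M0 \<le> n \<Longrightarrow> Y n \<le> - K - 1"
    using Y unfolding filterlim_at_bot eventually_sequentially by blast
  define M where "M = max M0 N"
  have step': "Y (Suc n) \<le> \<bar>C\<bar> + r * Y n" if "M \<le> n" for n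
    using step[of n] that abs_ge_self[of C] unfolding M_def by simp
  have "Y (M + k) \<le> - (r ^ k)" for k
  proof -
    have "Y (M + k) + K \<le> r ^ k * (Y M + K)"
      unfolding K_def by (rule affine_recursion_upper[of M Y "\<bar>C\<bar>" r k]) (use step' r in auto)
    also have "\<dots> \<le> r ^ k * (-1)"
      using M0[of M] r unfolding M_def by (intro mult_left_mono) auto
    finally show ?thesis using K by simp
  qed
  then show ?thesis by (rule that)
qed

lemma convergent_if_summable_differences:
  fixes f :: "nat \<Rightarrow> real"
  assumes "summable (\<lambda>n. f (Suc n) - f n)"
  shows "convergent f"
proof -
  have "(\<lambda>n. f 0 + (\<Sum>k<n. f (Suc k) - f k)) \<longlonglongrightarrow> f 0 + (\<Sum>n. f (Suc n) - f n)"
    by (intro tendsto_add tendsto_const summable_LIMSEQ assms)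
  then show ?thesis
    unfolding convergent_def by (auto simp: sum_lessThan_telescope)
qed

text \<open>The normalised sequence \<open>X n / \<delta>^n\<close> converges since its increments are \<open>O(\<delta>^-n)\<close>; its limit
  is negative because, once very negative, \<open>X\<close> decreases at least like \<open>-\<delta>^n\<close>.\<close>
lemma normalized_limit_of_bounded_defect:
  fixes X :: "nat \<Rightarrow> real"
  assumes d: "1 < \<delta>" and defect: "\<And>n. N \<le> n \<Longrightarrow> \<bar>X (Suc n) - \<delta> * X n\<bar> \<le> C"
    and X: "filterlim X at_bot sequentially"
  obtains G where "G < 0" "(\<lambda>n. X n / \<delta> ^ n) \<longlonglongrightarrow> G"
proof -
  define g where "g k = X (k + N) / \<delta> ^ (k + N)" for k
  have bound: "norm (g (Suc k) - g k) \<le> C / \<delta> ^ (N + 1) * (1 / \<delta>) ^ k" for k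
  proof -
    have "norm (g (Suc k) - g k) = \<bar>X (Suc (k + N)) - \<delta> * X (k + N)\<bar> / \<delta> ^ Suc (k + N)"
      unfolding g_def using d by (simp add: field_simps)
    also have "\<dots> \<le> C / \<delta> ^ Suc (k + N)"
      using defect[of "k + N"] d by (intro divide_right_mono) auto
    also have "\<dots> = C / \<delta> ^ (N + 1) * (1 / \<delta>) ^ k"
      using d by (simp add: power_add field_simps)
    finally show ?thesis .
  qed
  have "summable (\<lambda>k. C / \<delta> ^ (N + 1) * (1 / \<delta>) ^ k)"
    using d by (intro summable_mult summable_geometric) auto
  then have "summable (\<lambda>k. g (Suc k) - g k)"
    by (rule summable_comparison_test') (use bound in auto)
  then obtain G where "g \<longlonglongrightarrow> G"
    using convergent_if_summable_differences unfolding convergent_def by blast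
  then have XG: "(\<lambda>n. X n / \<delta> ^ n) \<longlonglongrightarrow> G"
    unfolding g_def by (rule LIMSEQ_offset)
  have step: "X (Suc n) \<le> C + \<delta> * X n" if "N \<le> n" for n
    using defect[OF that] by (simp add: abs_le_iff)
  obtain M where M: "\<And>k. X (M + k) \<le> - (\<delta> ^ k)"
    using affine_recursion_below_exponential[of N X C \<delta>, OF step d X] by blast
  have "X (k + M) / \<delta> ^ (k + M) \<le> - 1 / \<delta> ^ M" for k
  proof -
    have "X (k + M) / \<delta> ^ (k + M) \<le> - (\<delta> ^ k) / \<delta> ^ (k + M)"
      using M[of k] d by (intro divide_right_mono) (auto simp: add.commute)
    also have "\<dots> = - 1 / \<delta> ^ M"
      using d by (simp add: power_add)
    finally show ?thesis .
  qed
  then have "G \<le> - 1 / \<delta> ^ M"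
    using LIMSEQ_ignore_initial_segment[OF XG, of M] by (intro LIMSEQ_le_const2) auto
  moreover have "0 < 1 / \<delta> ^ M" using d by simp
  ultimately have "G < 0" by linarith
  then show ?thesis using XG by (rule that)
qed

lemma eventually_le_by_descent:
  fixes v :: "nat \<Rightarrow> real"
  assumes \<kappa>: "0 < \<kappa>" and step: "\<And>n. N \<le> n \<Longrightarrow> v (Suc n) \<le> max (v n) \<epsilon> - \<kappa>"
  obtains M where "\<And>n. M \<le> n \<Longrightarrow> v n \<le> \<epsilon>"
proof -
  have "\<exists>n\<ge>N. v n \<le> \<epsilon>"
  proof (rule ccontr)
    assume "\<not> ?thesis"
    then have gt: "\<And>n. N \<le> n \<Longrightarrow> \<epsilon> < v n" by force
    have dec: "v (N + k) \<le> v N - real k * \<kappa>" for k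
    proof (induction k)
      case (Suc k)
      then show ?case
        using step[of "N + k"] gt[of "N + k"] by (simp add: algebra_simps)
    qed simp
    obtain k where "(v N - \<epsilon>) / \<kappa> < real k"
      using reals_Archimedean2 by blast
    then have "v (N + k) < \<epsilon>"
      using dec[of k] \<kappa> by (simp add: field_simps)
    then show False using gt[of "N + k"] by simp
  qed
  then obtain M where M: "N \<le> M" "v M \<le> \<epsilon>" by blast
  have "v (M + k) \<le> \<epsilon>" for k
  proof (induction k)
    case (Suc k)
    then show ?case using step[of "M + k"] M \<kappa> by simp
  qed (use M in simp)
  then show ?thesis
    using that[of M] by (metis le_add_diff_inverse)
qed

lemma normalized_tendsto_bot_of_faster_recursion:
  fixes Y :: "nat \<Rightarrow> real"
  assumes d: "1 < \<delta>" "\<delta> < r" and step: "\<And>n. N \<le> n \<Longrightarrow> Y (Suc n) \<le> C + r * Y n"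
    and Y: "filterlim Y at_bot sequentially"
  shows "filterlim (\<lambda>n. Y n / \<delta> ^ n) at_bot sequentially"
proof -
  obtain M where M: "\<And>k. Y (M + k) \<le> - (r ^ k)"
    by (rule affine_recursion_below_exponential[of N Y C r, OF step _ Y]) (use d in auto)
  have "(r / \<delta>) ^ n / r ^ M \<le> - Y n / \<delta> ^ n" if "M \<le> n" for n
  proof -
    have "(r / \<delta>) ^ n / r ^ M = r ^ (n - M) / \<delta> ^ n"
      using that d by (simp add: power_divide power_diff)
    also have "\<dots> \<le> - Y n / \<delta> ^ n"
      using M[of "n - M"] that d by (intro divide_right_mono) auto
    finally show ?thesis .
  qed
  moreover have "filterlim (\<lambda>n. (r / \<delta>) ^ n * (1 / r ^ M)) at_top sequentially"
    using d by (intro filterlim_at_top_mult_tendsto_pos[OF tendsto_const] realpow_tendsto_at_top) auto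
  ultimately have "filterlim (\<lambda>n. - Y n / \<delta> ^ n) at_top sequentially"
    by (elim filterlim_at_top_mono) (auto simp: eventually_sequentially)
  then show ?thesis
    by (simp add: filterlim_uminus_at_bot)
qed

lemma exists_below_neg_exponential:
  fixes Y :: "nat \<Rightarrow> real"
  assumes d: "1 < \<delta>" "\<delta> < \<delta>'"
    and step: "\<And>n. M \<le> n \<Longrightarrow> - c * \<delta> ^ n < Y n \<Longrightarrow> Y (Suc n) \<le> C + \<delta>' * Y n"
    and Y: "filterlim Y at_bot sequentially"
  shows "\<exists>n\<ge>M. Y n \<le> - c * \<delta> ^ n"
proof (rule ccontr)
  assume "\<not> ?thesis"
  then have above: "- c * \<delta> ^ n < Y n" if "M \<le> n" for n
    using that by force
  have "filterlim (\<lambda>n. Y n / \<delta> ^ n) at_bot sequentially"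
    using step above by (intro normalized_tendsto_bot_of_faster_recursion[OF d _ Y]) blast
  then obtain n where "M \<le> n" "Y n / \<delta> ^ n \<le> - c"
    unfolding filterlim_at_bot eventually_sequentially by (metis nle_le)
  with above[of n] d show False by (simp add: field_simps)
qed

text \<open>Otherwise the \<open>\<delta>'\<close>-branch of the recursion would take over and drive \<open>Y n / \<delta>^n\<close> to \<open>-\<infinity>\<close>.\<close>
lemma eventually_below_neg_exponential:
  fixes X Y :: "nat \<Rightarrow> real"
  assumes d: "1 < \<delta>" "\<delta> < \<delta>'" and \<gamma>: "0 < \<gamma>"
    and step: "\<And>n. N \<le> n \<Longrightarrow> Y (Suc n) \<le> C + max (X n) (\<delta>' * Y n)"
    and X: "\<And>n. N \<le> n \<Longrightarrow> X n \<le> - \<gamma> * \<delta> ^ n"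
    and Y: "filterlim Y at_bot sequentially"
  obtains c M where "0 < c" "\<And>n. M \<le> n \<Longrightarrow> Y n \<le> - c * \<delta> ^ n"
proof -
  define c where "c = \<gamma> / (2 * \<delta>')"
  have c: "0 < c" "\<delta>' * c = \<gamma> / 2" "\<delta> * c < \<gamma> / 2"
    using d \<gamma> by (auto simp: c_def field_simps)
  have gap: "0 < (\<delta>' - \<delta>) * c" using d c by simp
  obtain M0 where M0: "\<And>n. M0 \<le> n \<Longrightarrow> max (2 * C / \<gamma>) (C / ((\<delta>' - \<delta>) * c)) \<le> \<delta> ^ n"
    using eventually_realpow_ge[OF d(1)] by blast
  define M where "M = max M0 N"
  have C: "C \<le> \<gamma> / 2 * \<delta> ^ n" "C \<le> (\<delta>' - \<delta>) * c * \<delta> ^ n" if "M \<le> n" for n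
    using M0[of n] that \<gamma> gap unfolding M_def by (auto simp: field_simps)
  have "Y (Suc n) \<le> C + \<delta>' * Y n" if n: "M \<le> n" and "- c * \<delta> ^ n < Y n" for n
  proof -
    have "X n \<le> - \<gamma> * \<delta> ^ n"
      using X[of n] n unfolding M_def by simp
    also have "\<dots> \<le> \<delta>' * (- c * \<delta> ^ n)"
      using c(2) \<gamma> d by (simp add: algebra_simps)
    also have "\<dots> \<le> \<delta>' * Y n"
      using that d by (intro mult_left_mono) auto
    finally show ?thesis using step[of n] n unfolding M_def by simp
  qed
  then obtain n1 where n1: "M \<le> n1" "Y n1 \<le> - c * \<delta> ^ n1"
    using exists_below_neg_exponential[OF d _ Y] by blast
  have inv: "Y (Suc n) \<le> - c * \<delta> ^ Suc n" if n: "M \<le> n" and Yn: "Y n \<le> - c * \<delta> ^ n" for n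
  proof -
    have "X n + C \<le> - (\<gamma> / 2) * \<delta> ^ n"
      using X[of n] C(1)[OF n] n unfolding M_def by simp
    also have "\<dots> \<le> - c * \<delta> ^ Suc n"
      using c(3) d by (simp add: algebra_simps)
    finally have 1: "X n + C \<le> - c * \<delta> ^ Suc n" .
    have "\<delta>' * Y n \<le> \<delta>' * (- c * \<delta> ^ n)"
      using Yn d by (intro mult_left_mono) auto
    then have 2: "\<delta>' * Y n + C \<le> - c * \<delta> ^ Suc n"
      using C(2)[OF n] by (simp add: algebra_simps)
    show ?thesis
      using step[of n] n 1 2 unfolding M_def by (simp add: max_def split: if_splits)
  qed
  have "Y n \<le> - c * \<delta> ^ n" if "n1 \<le> n" for n
    using that by (induction rule: dec_induct) (use n1 inv in auto)
  then show ?thesis using that c(1) by blast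
qed

text \<open>Splitting at \<open>max u e\<close>: the branch \<open>m2 * u\<close> loses the factor \<open>\<delta> - m2\<close> once \<open>u \<ge> e\<close>.\<close>
lemma max_branches_le_dominant:
  fixes u e K K0 m1 m2 \<delta> :: real
  assumes m: "0 \<le> m1" "m1 < m2" "m2 < \<delta>" and "0 < e" and K0: "K0 \<le> (\<delta> - m2) * e" "K0 \<le> K"
  shows "max (m1 * u) (max (m2 * u) (\<delta> * u - K)) \<le> \<delta> * max u e - K0"
proof -
  define W where "W = max u e"
  have W: "u \<le> W" "e \<le> W" "0 < W"
    using \<open>0 < e\<close> unfolding W_def by auto
  have "(\<delta> - m2) * e \<le> (\<delta> - m2) * W"
    using W m by (intro mult_left_mono) auto
  then have "m2 * W \<le> \<delta> * W - K0"
    using K0(1) by (simp add: algebra_simps)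
  moreover have "m1 * u \<le> m1 * W" "m1 * W \<le> m2 * W" "m2 * u \<le> m2 * W" "\<delta> * u \<le> \<delta> * W"
    using W m by (auto intro: mult_left_mono mult_right_mono)
  ultimately show ?thesis
    unfolding W_def[symmetric] using K0(2) by simp
qed

lemma eventually_below_eps_exponential:
  fixes U :: "nat \<Rightarrow> real"
  assumes d: "1 < \<delta>" and m: "0 \<le> m1" "m1 < m2" "m2 < \<delta>" and \<kappa>: "0 < \<kappa>" and \<epsilon>: "0 < \<epsilon>"
    and step: "\<And>n. N \<le> n \<Longrightarrow> U (Suc n) \<le> C + max (m1 * U n) (max (m2 * U n) (\<delta> * U n - \<kappa> * \<delta> ^ n))"
  obtains M where "\<And>n. M \<le> n \<Longrightarrow> U n \<le> \<epsilon> * \<delta> ^ n"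
proof -
  define \<kappa>0 where "\<kappa>0 = min ((\<delta> - m2) * \<epsilon>) \<kappa>"
  have \<kappa>0: "0 < \<kappa>0" "\<kappa>0 \<le> (\<delta> - m2) * \<epsilon>" "\<kappa>0 \<le> \<kappa>"
    unfolding \<kappa>0_def using m \<kappa> \<epsilon> by auto
  obtain M0 where M0: "\<And>n. M0 \<le> n \<Longrightarrow> 2 * C / \<kappa>0 \<le> \<delta> ^ n"
    using eventually_realpow_ge[OF d] by blast
  define v where "v n = U n / \<delta> ^ n" for n
  have "v (Suc n) \<le> max (v n) \<epsilon> - \<kappa>0 / (2 * \<delta>)" if n: "max M0 N \<le> n" for n
  proof -
    define W where "W = max (U n) (\<epsilon> * \<delta> ^ n)"
    have "\<kappa>0 * \<delta> ^ n \<le> (\<delta> - m2) * (\<epsilon> * \<delta> ^ n)" "\<kappa>0 * \<delta> ^ n \<le> \<kappa> * \<delta> ^ n"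
      using \<kappa>0 d by (simp_all add: mult_right_mono)
    then have "max (m1 * U n) (max (m2 * U n) (\<delta> * U n - \<kappa> * \<delta> ^ n)) \<le> \<delta> * W - \<kappa>0 * \<delta> ^ n"
      unfolding W_def using m \<epsilon> d by (intro max_branches_le_dominant) auto
    moreover have "C \<le> \<kappa>0 / 2 * \<delta> ^ n"
      using M0[of n] n \<kappa>0 by (simp add: field_simps)
    moreover have "N \<le> n" using n by simp
    ultimately have "U (Suc n) \<le> \<delta> * W - \<kappa>0 / 2 * \<delta> ^ n"
      using step by fastforce
    then have "v (Suc n) \<le> (\<delta> * W - \<kappa>0 / 2 * \<delta> ^ n) / \<delta> ^ Suc n"
      unfolding v_def using d by (intro divide_right_mono) auto
    also have "\<dots> = W / \<delta> ^ n - \<kappa>0 / (2 * \<delta>)"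
      using d by (simp add: field_simps)
    also have "W / \<delta> ^ n = max (v n) \<epsilon>"
      unfolding W_def v_def using d by (simp add: max_divide_distrib_right)
    finally show ?thesis .
  qed
  moreover have "0 < \<kappa>0 / (2 * \<delta>)" using \<kappa>0 d by simp
  ultimately obtain M where "\<And>n. M \<le> n \<Longrightarrow> v n \<le> \<epsilon>"
    using eventually_le_by_descent by blast
  then have "\<And>n. M \<le> n \<Longrightarrow> U n \<le> \<epsilon> * \<delta> ^ n"
    using d unfolding v_def by (simp add: field_simps)
  then show ?thesis by (rule that)
qed

lemma eventually_mult_power_le:
  fixes m \<delta> \<epsilon> B :: real
  assumes "0 < m" "m < \<delta>" "0 < \<epsilon>"
  obtains k0 where "\<And>k. k0 \<le> k \<Longrightarrow> B * m ^ k \<le> \<epsilon> * \<delta> ^ k"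
proof -
  obtain k0 where k0: "\<And>k. k0 \<le> k \<Longrightarrow> B / \<epsilon> \<le> (\<delta> / m) ^ k"
    using eventually_realpow_ge[of "\<delta> / m"] assms by auto
  have "B * m ^ k \<le> \<epsilon> * \<delta> ^ k" if "k0 \<le> k" for k
  proof -
    have "B \<le> \<epsilon> * (\<delta> / m) ^ k"
      using k0[OF that] assms by (simp add: field_simps)
    then have "B * m ^ k \<le> \<epsilon> * (\<delta> / m) ^ k * m ^ k"
      using assms by (intro mult_right_mono) auto
    also have "\<dots> = \<epsilon> * \<delta> ^ k"
      using assms by (simp add: power_divide)
    finally show ?thesis .
  qed
  then show ?thesis by (rule that)
qed

text \<open>Once trapped below \<open>-K\<close>, the sequence decreases at most like \<open>m^n\<close>, which is \<open>o(\<delta>^n)\<close>.\<close>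
lemma eventually_above_neg_eps_exponential_if_trapped:
  fixes U :: "nat \<Rightarrow> real"
  assumes m: "2 \<le> m" "m < \<delta>" and C: "0 \<le> C" "C \<le> K" and "0 < K" and \<epsilon>: "0 < \<epsilon>"
    and start: "U n1 \<le> - K"
    and upper: "\<And>n. n1 \<le> n \<Longrightarrow> U n < 0 \<Longrightarrow> U (Suc n) \<le> C + m * U n"
    and lower: "\<And>n. n1 \<le> n \<Longrightarrow> U n \<le> - K \<Longrightarrow> m * U n - C \<le> U (Suc n)"
  obtains M where "\<And>n. M \<le> n \<Longrightarrow> - \<epsilon> * \<delta> ^ n \<le> U n"
proof -
  have trapped: "U n \<le> - K" if "n1 \<le> n" for n
    using that
  proof (induction rule: dec_induct)
    case (step n)
    then have "m * U n \<le> 2 * U n"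
      using m \<open>0 < K\<close> by (intro mult_right_mono_neg) auto
    moreover have "U (Suc n) \<le> C + m * U n"
      using upper step \<open>0 < K\<close> by simp
    ultimately show ?case
      using step C by linarith
  qed (rule start)
  then have "m * U n - C \<le> U (Suc n)" if "n1 \<le> n" for n
    using lower that by blast
  then have growth: "m ^ k * (U n1 - C / (m - 1)) \<le> U (n1 + k) - C / (m - 1)" for k
    by (rule affine_recursion_lower[of n1 m U C k]) (use m in auto)
  define B where "B = C / (m - 1) - U n1"
  obtain k0 where k0: "\<And>k. k0 \<le> k \<Longrightarrow> B * m ^ k \<le> (\<epsilon> * \<delta> ^ n1) * \<delta> ^ k"
    by (rule eventually_mult_power_le[where m = m and \<delta> = \<delta> and \<epsilon> = "\<epsilon> * \<delta> ^ n1" and B = B])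
       (use m \<epsilon> in auto)
  have "0 \<le> C / (m - 1)" using C m by simp
  have "- \<epsilon> * \<delta> ^ n \<le> U n" if "n1 + k0 \<le> n" for n
  proof -
    define k where "k = n - n1"
    have nk: "n = n1 + k" "k0 \<le> k" using that unfolding k_def by auto
    have "B * m ^ k \<le> \<epsilon> * \<delta> ^ n"
      using k0[OF nk(2)] unfolding nk(1) by (simp add: power_add ac_simps)
    moreover have "m ^ k * (U n1 - C / (m - 1)) = - (B * m ^ k)"
      unfolding B_def by (simp add: algebra_simps)
    ultimately show ?thesis
      using growth[of k] \<open>0 \<le> C / (m - 1)\<close> unfolding nk(1) by linarith
  qed
  then show ?thesis by (rule that)
qed

lemma eventually_above_neg_eps_exponential:
  fixes U :: "nat \<Rightarrow> real"
  assumes m: "2 \<le> m" "m < \<delta>" and C: "0 \<le> C" and \<epsilon>: "0 < \<epsilon>"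
    and upper: "\<And>n. N \<le> n \<Longrightarrow> U n < 0 \<Longrightarrow> U (Suc n) \<le> C + m * U n"
    and lower: "\<And>n. N \<le> n \<Longrightarrow> U n \<le> L \<Longrightarrow> m * U n - C \<le> U (Suc n)"
  obtains M where "\<And>n. M \<le> n \<Longrightarrow> - \<epsilon> * \<delta> ^ n \<le> U n"
proof -
  define K where "K = C + max (- L) 0 + 1"
  have K: "0 < K" "C \<le> K" "- K \<le> L"
    unfolding K_def using C by auto
  show ?thesis
  proof (cases "\<forall>n\<ge>N. - K < U n")
    case True
    obtain M where "\<And>n. M \<le> n \<Longrightarrow> K / \<epsilon> \<le> \<delta> ^ n"
      using eventually_realpow_ge[of \<delta>] m by auto
    then have "- \<epsilon> * \<delta> ^ n \<le> U n" if "max N M \<le> n" for n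
      using True that \<epsilon> by (force simp: field_simps)
    then show ?thesis by (rule that)
  next
    case False
    then obtain n1 where n1: "N \<le> n1" "U n1 \<le> - K" by force
    show ?thesis
      by (rule eventually_above_neg_eps_exponential_if_trapped[where U = U, OF m C K(2,1) \<epsilon> n1(2)])
         (use upper lower n1(1) K(3) that in auto)
  qed
qed

lemma normalized_tendsto_zero_of_recursion:
  fixes U :: "nat \<Rightarrow> real"
  assumes m: "2 \<le> m1" "m1 < m2" "m2 < \<delta>" and \<kappa>: "0 < \<kappa>" and C: "0 \<le> C"
    and upper: "\<And>n. N \<le> n \<Longrightarrow> U (Suc n) \<le> C + max (m1 * U n) (max (m2 * U n) (\<delta> * U n - \<kappa> * \<delta> ^ n))"
    and upper_neg: "\<And>n. N \<le> n \<Longrightarrow> U n < 0 \<Longrightarrow> U (Suc n) \<le> C + m1 * U n"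
    and lower: "\<And>n. N \<le> n \<Longrightarrow> U n \<le> L \<Longrightarrow> m1 * U n - C \<le> U (Suc n)"
  shows "(\<lambda>n. U n / \<delta> ^ n) \<longlonglongrightarrow> 0"
  unfolding tendsto_iff
proof (intro allI impI)
  fix r :: real assume "0 < r"
  have d: "1 < \<delta>" using m by simp
  obtain M1 where M1: "\<And>n. M1 \<le> n \<Longrightarrow> U n \<le> r / 2 * \<delta> ^ n"
    by (rule eventually_below_eps_exponential[where \<epsilon> = "r / 2", OF d _ _ _ \<kappa> _ upper]) (use m \<open>0 < r\<close> in auto)
  obtain M2 where M2: "\<And>n. M2 \<le> n \<Longrightarrow> - (r / 2) * \<delta> ^ n \<le> U n"
    by (rule eventually_above_neg_eps_exponential[of m1 \<delta> C "r / 2" N U L])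
       (use m C \<open>0 < r\<close> upper_neg lower in auto)
  have "dist (U n / \<delta> ^ n) 0 < r" if "max M1 M2 \<le> n" for n
  proof -
    have "0 < r * \<delta> ^ n" using d \<open>0 < r\<close> by simp
    then show ?thesis
      using M1[of n] M2[of n] that d by (simp add: field_simps abs_less_iff)
  qed
  then show "\<forall>\<^sub>F n in sequentially. dist (U n / \<delta> ^ n) 0 < r"
    unfolding eventually_sequentially by blast
qed

lemma tropical_max_le_of_nonpos:
  fixes x y nl ml np mp \<delta>' :: real
  assumes "1 \<le> nl" "1 \<le> np" "0 \<le> ml" "0 \<le> mp" "x \<le> 0" "y \<le> 0"
  shows "max (nl * x + ml * y) (max (np * x + mp * y) (\<delta>' * y)) \<le> max x (\<delta>' * y)"
proof -
  have "nl * x \<le> 1 * x" "np * x \<le> 1 * x"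
    using mult_right_mono_neg[OF assms(1,5)] mult_right_mono_neg[OF assms(2,5)] by simp_all
  moreover have "ml * y \<le> 0" "mp * y \<le> 0"
    using assms by (auto intro: mult_nonneg_nonpos)
  ultimately show ?thesis by (simp add: max_def)
qed

lemma difference_step_bounds:
  fixes x x' y y' \<alpha> \<delta> \<delta>' nl ml np mp C :: real
  assumes nl: "nl = \<alpha> * (\<delta> - ml)" and np: "np = \<alpha> * (\<delta> - mp)" and \<alpha>: "0 \<le> \<alpha>"
    and defect: "\<bar>x' - \<delta> * x\<bar> \<le> C"
  shows "y' \<le> C + max (nl * x + ml * y) (max (np * x + mp * y) (\<delta>' * y)) \<Longrightarrow>
      y' - \<alpha> * x' \<le> (1 + \<alpha>) * C +
        max (ml * (y - \<alpha> * x)) (max (mp * (y - \<alpha> * x)) (\<delta> * (y - \<alpha> * x) + (\<delta>' - \<delta>) * y))"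
    and "nl * x + ml * y - C \<le> y' \<Longrightarrow> ml * (y - \<alpha> * x) - (1 + \<alpha>) * C \<le> y' - \<alpha> * x'"
proof -
  have "\<alpha> * (\<delta> * x - C) \<le> \<alpha> * x'" "\<alpha> * x' \<le> \<alpha> * (\<delta> * x + C)"
    using defect \<alpha> by (intro mult_left_mono; simp add: abs_le_iff)+
  then have ax: "\<alpha> * \<delta> * x - \<alpha> * C \<le> \<alpha> * x'" "\<alpha> * x' \<le> \<alpha> * \<delta> * x + \<alpha> * C"
    by (simp_all add: algebra_simps)
  have "max (nl * x + ml * y) (max (np * x + mp * y) (\<delta>' * y)) - \<alpha> * \<delta> * x =
      max (ml * (y - \<alpha> * x)) (max (mp * (y - \<alpha> * x)) (\<delta> * (y - \<alpha> * x) + (\<delta>' - \<delta>) * y))"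
    unfolding max_diff_distrib_left nl np by (simp add: algebra_simps)
  then show "y' \<le> C + max (nl * x + ml * y) (max (np * x + mp * y) (\<delta>' * y)) \<Longrightarrow>
      y' - \<alpha> * x' \<le> (1 + \<alpha>) * C +
        max (ml * (y - \<alpha> * x)) (max (mp * (y - \<alpha> * x)) (\<delta> * (y - \<alpha> * x) + (\<delta>' - \<delta>) * y))"
    using ax(1) by (simp add: algebra_simps)
  have "nl * x + ml * y - \<alpha> * \<delta> * x = ml * (y - \<alpha> * x)"
    unfolding nl by (simp add: algebra_simps)
  then show "nl * x + ml * y - C \<le> y' \<Longrightarrow> ml * (y - \<alpha> * x) - (1 + \<alpha>) * C \<le> y' - \<alpha> * x'"
    using ax(2) by (simp add: algebra_simps)
qed

text \<open>The normalised sequence \<open>X n / \<delta>^n\<close> converges to some \<open>G < 0\<close>; the difference \<open>U = Y - \<alpha> X\<close>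
  then obeys affine recursions with multipliers \<open>ml < mp < \<delta>\<close> up to an exponentially negative
  correction, whence \<open>U n / \<delta>^n \<longrightarrow> 0\<close>.\<close>
lemma normalized_limits_of_tropical_recursion:
  fixes X Y :: "nat \<Rightarrow> real" and \<delta> \<alpha> nl ml np mp \<delta>' C L :: real
  assumes d: "1 < \<delta>" and \<alpha>: "0 < \<alpha>" and n: "1 \<le> nl" "1 \<le> np"
    and m: "2 \<le> ml" "ml < mp" "mp < \<delta>" "\<delta> < \<delta>'"
    and nl: "nl = \<alpha> * (\<delta> - ml)" and np: "np = \<alpha> * (\<delta> - mp)"
    and defect: "\<And>n. N \<le> n \<Longrightarrow> \<bar>X (Suc n) - \<delta> * X n\<bar> \<le> C"
    and X_neg: "\<And>n. N \<le> n \<Longrightarrow> X n \<le> 0" and Y_neg: "\<And>n. N \<le> n \<Longrightarrow> Y n \<le> 0"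
    and upper: "\<And>n. N \<le> n \<Longrightarrow>
      Y (Suc n) \<le> C + max (nl * X n + ml * Y n) (max (np * X n + mp * Y n) (\<delta>' * Y n))"
    and lower: "\<And>n. N \<le> n \<Longrightarrow> X n \<le> L \<Longrightarrow> Y n - \<alpha> * X n \<le> L \<Longrightarrow>
      nl * X n + ml * Y n - C \<le> Y (Suc n)"
    and X: "filterlim X at_bot sequentially" and Y: "filterlim Y at_bot sequentially"
  obtains G where "G < 0" "(\<lambda>n. X n / \<delta> ^ n) \<longlonglongrightarrow> G" "(\<lambda>n. Y n / \<delta> ^ n) \<longlonglongrightarrow> \<alpha> * G"
proof -
  obtain G where G: "G < 0" and XG: "(\<lambda>n. X n / \<delta> ^ n) \<longlonglongrightarrow> G"
    using normalized_limit_of_bounded_defect[of \<delta> N X C, OF d defect X] by blast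
  have C: "0 \<le> C" using defect[of N] by linarith
  define U where "U n = Y n - \<alpha> * X n" for n
  define C1 where "C1 = (1 + \<alpha>) * C"
  have C1: "0 \<le> C1" unfolding C1_def using C \<alpha> by simp
  have U_upper: "U (Suc n) \<le> C1 + max (ml * U n) (max (mp * U n) (\<delta> * U n + (\<delta>' - \<delta>) * Y n))"
    if "N \<le> n" for n
    unfolding U_def C1_def using \<alpha> by (intro difference_step_bounds(1)[OF nl np] defect upper that) simp
  have U_lower: "ml * U n - C1 \<le> U (Suc n)" if "N \<le> n" "X n \<le> L" "U n \<le> L" for n
    using that unfolding U_def C1_def using \<alpha> by (intro difference_step_bounds(2)[OF nl np] defect lower) auto
  have U_upper_neg: "U (Suc n) \<le> C1 + ml * U n" if "N \<le> n" "U n < 0" for n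
  proof -
    have "mp * U n \<le> ml * U n" "\<delta> * U n \<le> ml * U n"
      using that m by (auto intro: mult_right_mono_neg)
    moreover have "(\<delta>' - \<delta>) * Y n \<le> 0"
      using Y_neg[OF that(1)] m by (simp add: mult_nonneg_nonpos)
    ultimately show ?thesis using U_upper[OF that(1)] by linarith
  qed
  have Y_upper: "Y (Suc n) \<le> C + max (X n) (\<delta>' * Y n)" if "N \<le> n" for n
    using upper[OF that] tropical_max_le_of_nonpos[OF n _ _ X_neg[OF that] Y_neg[OF that], of ml mp \<delta>'] m
    by fastforce
  obtain N1 where N1: "\<And>n. N1 \<le> n \<Longrightarrow> X n / \<delta> ^ n < G / 2"
    using order_tendstoD(2)[OF XG, of "G / 2"] G unfolding eventually_sequentially by auto
  have X_exp: "X n \<le> - (- G / 2) * \<delta> ^ n" if "max N N1 \<le> n" for n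
    using N1[of n] that d by (simp add: field_simps)
  obtain c N2 where c: "0 < c" and N2: "\<And>n. N2 \<le> n \<Longrightarrow> Y n \<le> - c * \<delta> ^ n"
    by (rule eventually_below_neg_exponential[of \<delta> \<delta>' "- G / 2" "max N N1" Y C X])
       (use d m G Y_upper X_exp Y in auto)
  have U_upper': "U (Suc n) \<le> C1 + max (ml * U n) (max (mp * U n) (\<delta> * U n - (\<delta>' - \<delta>) * c * \<delta> ^ n))"
    if "max N N2 \<le> n" for n
  proof -
    have "(\<delta>' - \<delta>) * Y n \<le> (\<delta>' - \<delta>) * (- c * \<delta> ^ n)"
      using N2[of n] that m by (intro mult_left_mono) auto
    then show ?thesis
      using U_upper[of n] that by (auto simp: max_def algebra_simps split: if_splits)
  qed
  obtain N3 where N3: "\<And>n. N3 \<le> n \<Longrightarrow> X n \<le> L"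
    using X unfolding filterlim_at_bot eventually_sequentially by blast
  have "(\<lambda>n. U n / \<delta> ^ n) \<longlonglongrightarrow> 0"
    by (rule normalized_tendsto_zero_of_recursion[of ml mp \<delta> "(\<delta>' - \<delta>) * c" C1 "max N (max N2 N3)" U L])
       (use m c C1 U_upper' U_upper_neg U_lower N3 in auto)
  then have "(\<lambda>n. U n / \<delta> ^ n + \<alpha> * (X n / \<delta> ^ n)) \<longlonglongrightarrow> 0 + \<alpha> * G"
    by (intro tendsto_add tendsto_mult_left XG)
  moreover have "U n / \<delta> ^ n + \<alpha> * (X n / \<delta> ^ n) = Y n / \<delta> ^ n" for n
    unfolding U_def by (simp add: diff_divide_distrib)
  ultimately show ?thesis using that G XG by simp
qed

section \<open>Double power series\<close>

lemma norm_monomial_rescaled: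
  fixes c z w :: complex and \<rho> :: real
  assumes "0 < \<rho>"
  shows "norm (c * z ^ i * w ^ j) = norm c * \<rho> ^ (i + j) * ((norm z / \<rho>) ^ i * (norm w / \<rho>) ^ j)"
  using assms by (simp add: norm_mult norm_power power_add power_divide)

lemma summable_on_radius_coefficients:
  fixes b :: "nat \<Rightarrow> nat \<Rightarrow> complex"
  assumes "(\<lambda>(i, j). norm (b i j * of_real \<rho> ^ i * of_real \<rho> ^ j)) summable_on UNIV" "0 < \<rho>"
  shows "(\<lambda>(i, j). norm (b i j) * \<rho> ^ (i + j)) summable_on UNIV"
  using assms by (simp add: norm_mult norm_power power_add mult.assoc)

lemma summable_on_monomials:
  fixes b :: "nat \<Rightarrow> nat \<Rightarrow> complex"
  assumes "(\<lambda>(i, j). norm (b i j * z ^ i * w ^ j)) summable_on UNIV"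
  shows "(\<lambda>(i, j). b i j * z ^ i * w ^ j) summable_on A"
proof -
  have "(\<lambda>x. norm ((\<lambda>(i, j). b i j * z ^ i * w ^ j) x)) summable_on UNIV"
    using assms by (simp only: case_prod_unfold)
  then show ?thesis
    by (rule summable_on_subset_banach[OF abs_summable_summable]) auto
qed

lemma norm_double_series_le:
  fixes b :: "nat \<Rightarrow> nat \<Rightarrow> complex" and z w :: complex
  assumes zw: "(\<lambda>(i, j). norm (b i j * z ^ i * w ^ j)) summable_on UNIV"
    and radius: "(\<lambda>(i, j). norm (b i j) * \<rho> ^ (i + j)) summable_on UNIV" and \<rho>: "0 < \<rho>"
    and E: "\<And>i j. (i, j) \<in> A \<Longrightarrow> b i j \<noteq> 0 \<Longrightarrow> (norm z / \<rho>) ^ i * (norm w / \<rho>) ^ j \<le> E"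
    and "0 \<le> E"
  shows "norm (infsum (\<lambda>(i, j). b i j * z ^ i * w ^ j) A)
    \<le> infsum (\<lambda>(i, j). norm (b i j) * \<rho> ^ (i + j)) A * E"
proof -
  let ?f = "\<lambda>(i, j). b i j * z ^ i * w ^ j"
  let ?a = "\<lambda>(i, j). norm (b i j) * \<rho> ^ (i + j)"
  have bound: "norm (b i j * z ^ i * w ^ j) \<le> norm (b i j) * \<rho> ^ (i + j) * E" if "(i, j) \<in> A" for i j
  proof (cases "b i j = 0")
    case False
    then show ?thesis
      unfolding norm_monomial_rescaled[OF \<rho>] using E[OF that False] \<rho> by (intro mult_left_mono) auto
  qed (use \<open>0 \<le> E\<close> in simp)
  have "norm (infsum ?f A) \<le> infsum (\<lambda>k. ?a k * E) A"
  proof (rule norm_infsum_le[OF has_sum_infsum has_sum_infsum])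
    show "?f summable_on A" by (rule summable_on_monomials[OF zw])
    show "(\<lambda>k. ?a k * E) summable_on A"
      by (rule summable_on_cmult_left[OF summable_on_subset_banach[OF radius]]) simp
    show "norm (?f k) \<le> ?a k * E" if "k \<in> A" for k
      using bound that by (cases k) simp
  qed
  also have "\<dots> = infsum ?a A * E"
    by (rule infsum_cmult_left')
  finally show ?thesis .
qed

lemma norm_double_series_ge:
  fixes b :: "nat \<Rightarrow> nat \<Rightarrow> complex" and z w :: complex
  assumes zw: "(\<lambda>(i, j). norm (b i j * z ^ i * w ^ j)) summable_on UNIV"
    and radius: "(\<lambda>(i, j). norm (b i j) * \<rho> ^ (i + j)) summable_on UNIV" and \<rho>: "0 < \<rho>"
    and "0 \<le> \<epsilon>"
    and dominated: "\<And>i j. b i j \<noteq> 0 \<Longrightarrow> (i, j) \<noteq> (i0, j0) \<Longrightarrow>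
      (norm z / \<rho>) ^ i * (norm w / \<rho>) ^ j \<le> \<epsilon> * ((norm z / \<rho>) ^ i0 * (norm w / \<rho>) ^ j0)"
  shows "(norm (b i0 j0) * \<rho> ^ (i0 + j0) - (\<Sum>\<^sub>\<infinity>(i, j). norm (b i j) * \<rho> ^ (i + j)) * \<epsilon>)
      * ((norm z / \<rho>) ^ i0 * (norm w / \<rho>) ^ j0) \<le> norm (\<Sum>\<^sub>\<infinity>(i, j). b i j * z ^ i * w ^ j)"
proof -
  let ?f = "\<lambda>(i, j). b i j * z ^ i * w ^ j"
  let ?a = "\<lambda>(i, j). norm (b i j) * \<rho> ^ (i + j)"
  define P where "P = (norm z / \<rho>) ^ i0 * (norm w / \<rho>) ^ j0"
  define R where "R = UNIV - {(i0, j0)}"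
  have "0 \<le> P" unfolding P_def using \<rho> by simp
  have "infsum ?f (insert (i0, j0) R) = ?f (i0, j0) + infsum ?f R"
    by (rule infsum_insert[OF summable_on_monomials[OF zw]]) (simp add: R_def)
  moreover have "insert (i0, j0) R = UNIV"
    unfolding R_def by blast
  ultimately have split: "infsum ?f UNIV = ?f (i0, j0) + infsum ?f R"
    by simp
  have "norm (infsum ?f R) \<le> infsum ?a R * (\<epsilon> * P)"
    by (rule norm_double_series_le[OF zw radius \<rho>])
       (use dominated \<open>0 \<le> \<epsilon>\<close> \<open>0 \<le> P\<close> in \<open>auto simp: P_def R_def\<close>)
  also have "\<dots> \<le> infsum ?a UNIV * (\<epsilon> * P)"
  proof (rule mult_right_mono)
    show "infsum ?a R \<le> infsum ?a UNIV"
      by (rule infsum_mono2[OF summable_on_subset_banach[OF radius] radius])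
         (use \<rho> in \<open>auto simp: case_prod_unfold\<close>)
    show "0 \<le> \<epsilon> * P" using \<open>0 \<le> \<epsilon>\<close> \<open>0 \<le> P\<close> by simp
  qed
  finally have "norm (infsum ?f R) \<le> infsum ?a UNIV * (\<epsilon> * P)" .
  moreover have "norm (?f (i0, j0)) = norm (b i0 j0) * \<rho> ^ (i0 + j0) * P"
    unfolding P_def using norm_monomial_rescaled[OF \<rho>] by simp
  moreover have "norm (?f (i0, j0)) - norm (infsum ?f R) \<le> norm (infsum ?f UNIV)"
    unfolding split by (rule norm_diff_ineq)
  ultimately show ?thesis
    unfolding P_def[symmetric] by (simp add: algebra_simps)
qed

section \<open>Orbits near the origin\<close>

lemma ln_norm_div_tendsto_bot:
  fixes f :: "nat \<Rightarrow> 'a::real_normed_vector"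
  assumes "f \<longlonglongrightarrow> 0" "\<And>n. f n \<noteq> 0" "0 < \<rho>"
  shows "filterlim (\<lambda>n. ln (norm (f n) / \<rho>)) at_bot sequentially"
proof -
  have "(\<lambda>n. norm (f n) / \<rho>) \<longlonglongrightarrow> 0 / \<rho>"
    by (intro tendsto_divide tendsto_norm_zero assms(1) tendsto_const) (use assms(3) in simp)
  then have "filterlim (\<lambda>n. norm (f n) / \<rho>) (at_right 0) sequentially"
    using assms(2,3) by (intro tendsto_imp_filterlim_at_right) auto
  then show ?thesis by (rule filterlim_compose[OF ln_at_0])
qed

text \<open>This also holds for \<open>x = 0\<close>, because \<open>ln 0 = 0\<close>.\<close>
lemma ln_norm_div_nonpos:
  fixes x :: "'a::real_normed_vector"
  assumes "norm x \<le> \<rho>" "0 < \<rho>"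
  shows "ln (norm x / \<rho>) \<le> 0"
  using assms by (cases "x = 0") simp_all

text \<open>The orbit \<open>(zs n, ws n)\<close> of the skew product enters only through these properties;
  \<open>\<rho>\<close> is a radius of absolute convergence of \<open>q\<close>.\<close>
locale skew_orbit = newton_last_edge b \<delta> s nv mv
  for b :: "nat \<Rightarrow> nat \<Rightarrow> complex" and \<delta> s :: nat and nv mv :: "nat \<Rightarrow> nat" +
  fixes \<rho> r c1 c2 :: real and zs ws :: "nat \<Rightarrow> complex"
  assumes rho_pos: "0 < \<rho>"
    and radius_summable: "(\<lambda>(i, j). norm (b i j) * \<rho> ^ (i + j)) summable_on UNIV"
    and orbit_summable: "\<And>n. (\<lambda>(i, j). norm (b i j * zs n ^ i * ws n ^ j)) summable_on UNIV"
    and ws_Suc: "\<And>n. ws (Suc n) = (\<Sum>\<^sub>\<infinity>(i, j). b i j * zs n ^ i * ws n ^ j)"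
    and r_pos: "0 < r" and c1_pos: "0 < c1"
    and zs_Suc: "\<And>n. norm (zs n) \<le> r \<Longrightarrow>
      c1 * norm (zs n) ^ \<delta> \<le> norm (zs (Suc n)) \<and> norm (zs (Suc n)) \<le> c2 * norm (zs n) ^ \<delta>"
    and zs_tendsto: "zs \<longlonglongrightarrow> 0" and ws_tendsto: "ws \<longlonglongrightarrow> 0" and ws_nonzero: "\<And>n. ws n \<noteq> 0"
begin

definition coeff_mass :: real where
  "coeff_mass = (\<Sum>\<^sub>\<infinity>(i, j). norm (b i j) * \<rho> ^ (i + j))"

definition lead_weight :: real where
  "lead_weight = norm (b n_last m_last) * \<rho> ^ (n_last + m_last)"

definition lz :: "nat \<Rightarrow> real" where
  "lz n = ln (norm (zs n) / \<rho>)"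

definition lw :: "nat \<Rightarrow> real" where
  "lw n = ln (norm (ws n) / \<rho>)"

lemma delta_gt_1: "1 < real \<delta>"
  using m_less_delta m3 by linarith

lemma lead_weight_pos: "0 < lead_weight"
  unfolding lead_weight_def using coeff_last_vertex_nonzero rho_pos by simp

lemma coeff_mass_ge_lead_weight: "lead_weight \<le> coeff_mass"
proof -
  let ?a = "\<lambda>(i, j). norm (b i j) * \<rho> ^ (i + j)"
  have "infsum ?a {(n_last, m_last)} \<le> infsum ?a UNIV"
    using rho_pos by (intro infsum_mono2 radius_summable) auto
  then show ?thesis unfolding lead_weight_def coeff_mass_def by simp
qed

lemma coeff_mass_pos: "0 < coeff_mass"
  using lead_weight_pos coeff_mass_ge_lead_weight by linarith

lemma eventually_in_polydisc:
  obtains N where "\<And>n. N \<le> n \<Longrightarrow> norm (zs n) \<le> min r \<rho> \<and> norm (ws n) \<le> \<rho>"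
proof -
  have "\<forall>\<^sub>F n in sequentially. norm (zs n) < min r \<rho> \<and> norm (ws n) < \<rho>"
    using r_pos rho_pos
    by (intro eventually_conj order_tendstoD(2)[OF tendsto_norm_zero] zs_tendsto ws_tendsto) auto
  then show ?thesis
    using that unfolding eventually_sequentially by (meson less_imp_le)
qed

lemma log_coords_nonpos: "norm (zs n) \<le> \<rho> \<Longrightarrow> lz n \<le> 0" "norm (ws n) \<le> \<rho> \<Longrightarrow> lw n \<le> 0"
  unfolding lz_def lw_def using rho_pos ln_norm_div_nonpos by blast+

lemma monomial_eq_exp:
  assumes "zs n \<noteq> 0"
  shows "(norm (zs n) / \<rho>) ^ i * (norm (ws n) / \<rho>) ^ j = exp (real i * lz n + real j * lw n)"
  using assms ws_nonzero[of n] rho_pos unfolding lz_def lw_def by (simp add: exp_add exp_of_nat_mult)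

lemma lw_Suc_le:
  assumes "0 < E" and E: "\<And>i j. b i j \<noteq> 0 \<Longrightarrow> (norm (zs n) / \<rho>) ^ i * (norm (ws n) / \<rho>) ^ j \<le> E"
  shows "lw (Suc n) \<le> ln coeff_mass - ln \<rho> + ln E"
proof -
  have "norm (ws (Suc n)) \<le> coeff_mass * E"
    unfolding ws_Suc coeff_mass_def
    by (rule norm_double_series_le[OF orbit_summable radius_summable rho_pos]) (use E \<open>0 < E\<close> in auto)
  then have "ln (norm (ws (Suc n))) \<le> ln (coeff_mass * E)"
    using ws_nonzero[of "Suc n"] coeff_mass_pos \<open>0 < E\<close> by (subst ln_le_cancel_iff) auto
  then show ?thesis
    unfolding lw_def using ws_nonzero[of "Suc n"] rho_pos coeff_mass_pos \<open>0 < E\<close> by (simp add: ln_div ln_mult)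
qed

lemma lw_Suc_ge:
  assumes "zs n \<noteq> 0" "0 < \<epsilon>" "coeff_mass * \<epsilon> \<le> lead_weight / 2"
    and dominated: "\<And>i j. b i j \<noteq> 0 \<Longrightarrow> (i, j) \<noteq> (n_last, m_last) \<Longrightarrow>
      real i * lz n + real j * lw n \<le> real n_last * lz n + real m_last * lw n + ln \<epsilon>"
  shows "ln (lead_weight / 2) - ln \<rho> + (real n_last * lz n + real m_last * lw n) \<le> lw (Suc n)"
proof -
  define P where "P = exp (real n_last * lz n + real m_last * lw n)"
  have "(lead_weight - coeff_mass * \<epsilon>) *
      ((norm (zs n) / \<rho>) ^ n_last * (norm (ws n) / \<rho>) ^ m_last) \<le> norm (ws (Suc n))"
    unfolding ws_Suc coeff_mass_def lead_weight_def
  proof (rule norm_double_series_ge[OF orbit_summable radius_summable rho_pos])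
    fix i j assume "b i j \<noteq> 0" "(i, j) \<noteq> (n_last, m_last)"
    then have "exp (real i * lz n + real j * lw n) \<le> exp (real n_last * lz n + real m_last * lw n + ln \<epsilon>)"
      using dominated by simp
    then show "(norm (zs n) / \<rho>) ^ i * (norm (ws n) / \<rho>) ^ j \<le>
        \<epsilon> * ((norm (zs n) / \<rho>) ^ n_last * (norm (ws n) / \<rho>) ^ m_last)"
      unfolding monomial_eq_exp[OF assms(1)] using \<open>0 < \<epsilon>\<close> by (simp add: exp_add ac_simps)
  qed (use \<open>0 < \<epsilon>\<close> in simp)
  then have "(lead_weight - coeff_mass * \<epsilon>) * P \<le> norm (ws (Suc n))"
    unfolding monomial_eq_exp[OF assms(1)] P_def .
  moreover have "lead_weight / 2 * P \<le> (lead_weight - coeff_mass * \<epsilon>) * P"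
    using assms(3) unfolding P_def by (intro mult_right_mono) auto
  ultimately have "lead_weight / 2 * P \<le> norm (ws (Suc n))"
    by linarith
  moreover have "0 < lead_weight / 2 * P" "0 < norm (ws (Suc n))"
    using lead_weight_pos ws_nonzero[of "Suc n"] unfolding P_def by simp_all
  ultimately have "ln (lead_weight / 2 * P) \<le> ln (norm (ws (Suc n)))"
    by simp
  moreover have "ln (lead_weight / 2 * P) = ln (lead_weight / 2) + (real n_last * lz n + real m_last * lw n)"
    using lead_weight_pos unfolding P_def by (subst ln_mult) auto
  moreover have "lw (Suc n) = ln (norm (ws (Suc n))) - ln \<rho>"
    unfolding lw_def using ws_nonzero[of "Suc n"] rho_pos by (simp add: ln_div)
  ultimately show ?thesis by linarith
qed

lemma ln_rho_div_power_tendsto: "(\<lambda>n. ln \<rho> / real \<delta> ^ n) \<longlonglongrightarrow> 0"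
  by (intro tendsto_divide_0[OF tendsto_const] filterlim_realpow_sequentially_gt1) (use delta_gt_1 in simp)

lemma ln_norm_eq_log_coord: "ln (norm (ws n)) / real \<delta> ^ n = lw n / real \<delta> ^ n + ln \<rho> / real \<delta> ^ n"
  "zs n \<noteq> 0 \<Longrightarrow> ln (norm (zs n)) / real \<delta> ^ n = lz n / real \<delta> ^ n + ln \<rho> / real \<delta> ^ n"
  unfolding lz_def lw_def using ws_nonzero[of n] rho_pos by (simp_all add: ln_div add_divide_distrib[symmetric])

lemma zs_stays_zero:
  assumes "zs n0 = 0" "n0 \<le> n"
  shows "zs n = 0"
  using assms(2)
proof (induction rule: dec_induct)
  case (step n)
  then show ?case using zs_Suc[of n] r_pos delta_gt_1 by (simp add: power_0_left)
qed (rule assms(1))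

text \<open>Once \<open>z\<close> has reached \<open>0\<close> only the pure powers \<open>w^j\<close> with \<open>j \<ge> \<delta> + 1\<close> survive, so \<open>log |w|\<close> tends
  to \<open>-\<infinity>\<close> faster than \<open>\<delta>^n\<close>.\<close>
lemma ws_log_tendsto_bot_if_zs_zero:
  assumes "zs n0 = 0"
  shows "filterlim (\<lambda>n. ln (norm (ws n)) / real \<delta> ^ n) at_bot sequentially"
proof -
  obtain N where N: "\<And>n. N \<le> n \<Longrightarrow> norm (zs n) \<le> min r \<rho> \<and> norm (ws n) \<le> \<rho>"
    using eventually_in_polydisc by blast
  have "lw (Suc n) \<le> ln coeff_mass - ln \<rho> + (real \<delta> + 1) * lw n" if n: "max n0 N \<le> n" for n
  proof -
    define y where "y = norm (ws n) / \<rho>"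
    have y: "0 < y" "y \<le> 1"
      using ws_nonzero[of n] N[of n] n rho_pos unfolding y_def by auto
    have monomial: "(norm (zs n) / \<rho>) ^ i * y ^ j \<le> y ^ (\<delta> + 1)" if "b i j \<noteq> 0" for i j
    proof (cases "i = 0")
      case True
      then have "\<delta> + 1 \<le> j" using support_on_w_axis that by simp
      then show ?thesis using True y power_decreasing[of "\<delta> + 1" j y] by simp
    qed (use zs_stays_zero[OF assms, of n] n y in \<open>auto simp: power_0_left\<close>)
    have "lw (Suc n) \<le> ln coeff_mass - ln \<rho> + ln (y ^ (\<delta> + 1))"
    proof (rule lw_Suc_le)
      show "0 < y ^ (\<delta> + 1)" using y by simp
      show "(norm (zs n) / \<rho>) ^ i * (norm (ws n) / \<rho>) ^ j \<le> y ^ (\<delta> + 1)" if "b i j \<noteq> 0" for i j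
        using monomial[OF that] unfolding y_def .
    qed
    also have "ln (y ^ (\<delta> + 1)) = (real \<delta> + 1) * lw n"
      unfolding lw_def y_def[symmetric] using ln_realpow[of y "\<delta> + 1"] by simp
    finally show ?thesis .
  qed
  moreover have "filterlim lw at_bot sequentially"
    unfolding lw_def by (rule ln_norm_div_tendsto_bot[OF ws_tendsto ws_nonzero rho_pos])
  ultimately have "filterlim (\<lambda>n. lw n / real \<delta> ^ n) at_bot sequentially"
    using delta_gt_1 by (intro normalized_tendsto_bot_of_faster_recursion[of _ "real \<delta> + 1" "max n0 N"]) auto
  then show ?thesis
    unfolding ln_norm_eq_log_coord(1)
    by (subst add.commute, subst filterlim_tendsto_add_at_bot_iff[OF ln_rho_div_power_tendsto])
qed

lemma lz_defect_bounded:
  assumes nz: "\<And>n. zs n \<noteq> 0"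
  obtains C N where "\<And>n. N \<le> n \<Longrightarrow> \<bar>lz (Suc n) - real \<delta> * lz n\<bar> \<le> C"
proof -
  obtain N where N: "\<And>n. N \<le> n \<Longrightarrow> norm (zs n) \<le> min r \<rho> \<and> norm (ws n) \<le> \<rho>"
    using eventually_in_polydisc by blast
  have "\<bar>lz (Suc n) - real \<delta> * lz n\<bar> \<le> \<bar>ln c1\<bar> + \<bar>ln c2\<bar> + \<bar>(real \<delta> - 1) * ln \<rho>\<bar>" if n: "N \<le> n" for n
  proof -
    define u where "u = norm (zs n)"
    define u' where "u' = norm (zs (Suc n))"
    have u: "0 < u" "0 < u'" using nz unfolding u_def u'_def by simp_all
    have bounds: "c1 * u ^ \<delta> \<le> u'" "u' \<le> c2 * u ^ \<delta>"
      using zs_Suc[of n] N[OF n] unfolding u_def u'_def by auto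
    then have "0 < c2"
      using u by (smt (verit) zero_less_mult_pos2 zero_less_power)
    have "ln c1 + real \<delta> * ln u \<le> ln u'"
      using bounds(1) u c1_pos ln_le_cancel_iff[of "c1 * u ^ \<delta>" u'] by (simp add: ln_mult ln_realpow)
    moreover have "ln u' \<le> ln c2 + real \<delta> * ln u"
      using bounds(2) u \<open>0 < c2\<close> ln_le_cancel_iff[of u' "c2 * u ^ \<delta>"] by (simp add: ln_mult ln_realpow)
    moreover have "lz (Suc n) - real \<delta> * lz n = (ln u' - real \<delta> * ln u) + (real \<delta> - 1) * ln \<rho>"
      unfolding lz_def u_def[symmetric] u'_def[symmetric] using u rho_pos by (simp add: ln_div algebra_simps)
    ultimately show ?thesis by (simp add: abs_le_iff) linarith
  qed
  then show ?thesis by (rule that)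
qed

lemma lw_tropical_upper:
  assumes nz: "\<And>n. zs n \<noteq> 0"
  obtains C N where "0 \<le> C" "\<And>n. N \<le> n \<Longrightarrow> lw (Suc n) \<le> C +
    max (real n_last * lz n + real m_last * lw n) (max (real n_prev * lz n + real m_prev * lw n) (\<delta>' * lw n))"
proof -
  obtain N where N: "\<And>n. N \<le> n \<Longrightarrow> norm (zs n) \<le> min r \<rho> \<and> norm (ws n) \<le> \<rho>"
    using eventually_in_polydisc by blast
  have "lw (Suc n) \<le> \<bar>ln coeff_mass - ln \<rho>\<bar> +
    max (real n_last * lz n + real m_last * lw n) (max (real n_prev * lz n + real m_prev * lw n) (\<delta>' * lw n))"
    (is "_ \<le> _ + ?M") if n: "N \<le> n" for n
  proof -
    have "lw (Suc n) \<le> ln coeff_mass - ln \<rho> + ln (exp ?M)"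
    proof (rule lw_Suc_le)
      fix i j assume "b i j \<noteq> 0"
      then have "real i * lz n + real j * lw n \<le> ?M"
        using N[OF n] by (intro support_tropical_upper log_coords_nonpos) auto
      then show "(norm (zs n) / \<rho>) ^ i * (norm (ws n) / \<rho>) ^ j \<le> exp ?M"
        unfolding monomial_eq_exp[OF nz] by simp
    qed simp
    then show ?thesis by (simp only: ln_exp) linarith
  qed
  then show ?thesis using that[of "\<bar>ln coeff_mass - ln \<rho>\<bar>" N] by simp
qed

lemma lw_dominant_lower:
  assumes nz: "\<And>n. zs n \<noteq> 0"
  obtains C L N where "0 \<le> C" "\<And>n. N \<le> n \<Longrightarrow> lz n \<le> L \<Longrightarrow> lw n - \<alpha> * lz n \<le> L \<Longrightarrow>
    real n_last * lz n + real m_last * lw n - C \<le> lw (Suc n)"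
proof -
  obtain N where N: "\<And>n. N \<le> n \<Longrightarrow> norm (zs n) \<le> min r \<rho> \<and> norm (ws n) \<le> \<rho>"
    using eventually_in_polydisc by blast
  define \<epsilon> where "\<epsilon> = min 1 (lead_weight / (2 * coeff_mass))"
  have \<epsilon>: "0 < \<epsilon>" "\<epsilon> \<le> 1" "coeff_mass * \<epsilon> \<le> lead_weight / 2"
    using lead_weight_pos coeff_mass_pos unfolding \<epsilon>_def by (auto simp: min_def field_simps)
  have "real n_last * lz n + real m_last * lw n - \<bar>ln (lead_weight / 2) - ln \<rho>\<bar> \<le> lw (Suc n)"
    if n: "N \<le> n" and small: "lz n \<le> ln \<epsilon>" "lw n - \<alpha> * lz n \<le> ln \<epsilon>" for n
  proof -
    have "ln (lead_weight / 2) - ln \<rho> + (real n_last * lz n + real m_last * lw n) \<le> lw (Suc n)"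
    proof (rule lw_Suc_ge[OF nz \<epsilon>(1,3)])
      fix i j assume "b i j \<noteq> 0" "(i, j) \<noteq> (n_last, m_last)"
      moreover have "ln \<epsilon> \<le> 0"
        using \<epsilon> by simp
      then have "lw n - \<alpha> * lz n \<le> 0" "lz n \<le> 0"
        using small N[OF n] log_coords_nonpos(1) by auto
      ultimately have "real i * lz n + real j * lw n \<le>
          real n_last * lz n + real m_last * lw n + max (lz n) (lw n - \<alpha> * lz n)"
        by (intro support_dominated_by_last_vertex)
      then show "real i * lz n + real j * lw n \<le> real n_last * lz n + real m_last * lw n + ln \<epsilon>"
        using small by linarith
    qed
    then show ?thesis by linarith
  qed
  then show ?thesis using that[of "\<bar>ln (lead_weight / 2) - ln \<rho>\<bar>" N "ln \<epsilon>"] by simp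
qed

lemma log_limits_if_zs_nonzero:
  assumes nz: "\<And>n. zs n \<noteq> 0"
  obtains G where "G < 0" "(\<lambda>n. ln (norm (zs n)) / real \<delta> ^ n) \<longlonglongrightarrow> G"
    "(\<lambda>n. ln (norm (ws n)) / real \<delta> ^ n) \<longlonglongrightarrow> \<alpha> * G"
proof -
  obtain C1 N1 where defect: "\<And>n. N1 \<le> n \<Longrightarrow> \<bar>lz (Suc n) - real \<delta> * lz n\<bar> \<le> C1"
    by (rule lz_defect_bounded[OF nz]) blast
  obtain C2 N2 where "0 \<le> C2" and upper: "\<And>n. N2 \<le> n \<Longrightarrow> lw (Suc n) \<le> C2 +
    max (real n_last * lz n + real m_last * lw n) (max (real n_prev * lz n + real m_prev * lw n) (\<delta>' * lw n))"
    by (rule lw_tropical_upper[OF nz]) blast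
  obtain C3 L N3 where "0 \<le> C3" and lower: "\<And>n. N3 \<le> n \<Longrightarrow> lz n \<le> L \<Longrightarrow> lw n - \<alpha> * lz n \<le> L \<Longrightarrow>
    real n_last * lz n + real m_last * lw n - C3 \<le> lw (Suc n)"
    by (rule lw_dominant_lower[OF nz]) blast
  obtain N4 where N4: "\<And>n. N4 \<le> n \<Longrightarrow> norm (zs n) \<le> min r \<rho> \<and> norm (ws n) \<le> \<rho>"
    using eventually_in_polydisc by blast
  have "0 \<le> C1" using defect[of N1] by linarith
  define N where "N = max (max N1 N2) (max N3 N4)"
  define C where "C = C1 + C2 + C3"
  have N: "N1 \<le> n" "N2 \<le> n" "N3 \<le> n" "N4 \<le> n" if "N \<le> n" for n
    using that unfolding N_def by auto
  have defect': "\<bar>lz (Suc n) - real \<delta> * lz n\<bar> \<le> C" if "N \<le> n" for n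
    using defect[OF N(1)[OF that]] \<open>0 \<le> C2\<close> \<open>0 \<le> C3\<close> unfolding C_def by linarith
  have nonpos: "lz n \<le> 0" "lw n \<le> 0" if "N \<le> n" for n
    using N4[OF N(4)[OF that]] log_coords_nonpos by auto
  have upper': "lw (Suc n) \<le> C +
    max (real n_last * lz n + real m_last * lw n) (max (real n_prev * lz n + real m_prev * lw n) (\<delta>' * lw n))"
    if "N \<le> n" for n
    using upper[OF N(2)[OF that]] \<open>0 \<le> C1\<close> \<open>0 \<le> C3\<close> unfolding C_def by linarith
  have lower': "real n_last * lz n + real m_last * lw n - C \<le> lw (Suc n)"
    if "N \<le> n" "lz n \<le> L" "lw n - \<alpha> * lz n \<le> L" for n
    using lower[OF N(3)[OF that(1)] that(2,3)] \<open>0 \<le> C1\<close> \<open>0 \<le> C2\<close> unfolding C_def by linarith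
  have lz_bot: "filterlim lz at_bot sequentially"
    unfolding lz_def by (rule ln_norm_div_tendsto_bot[OF zs_tendsto nz rho_pos])
  have lw_bot: "filterlim lw at_bot sequentially"
    unfolding lw_def by (rule ln_norm_div_tendsto_bot[OF ws_tendsto ws_nonzero rho_pos])
  have vertices: "1 \<le> real n_last" "1 \<le> real n_prev" "2 \<le> real m_last" "real m_last < real m_prev"
    using n_prev_less_last n_prev_pos m2 m3 by auto
  obtain G where G: "G < 0" "(\<lambda>n. lz n / real \<delta> ^ n) \<longlonglongrightarrow> G"
    "(\<lambda>n. lw n / real \<delta> ^ n) \<longlonglongrightarrow> \<alpha> * G"
    by (rule normalized_limits_of_tropical_recursion[where \<delta> = "real \<delta>" and \<alpha> = \<alpha> and
        nl = "real n_last" and ml = "real m_last" and np = "real n_prev" and mp = "real m_prev" and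
        \<delta>' = \<delta>' and N = N and X = lz and Y = lw and C = C and L = L,
        OF delta_gt_1 alpha_pos vertices(1,2,3,4) m1 delta_less_delta' n_last_eq_alpha n_prev_eq_alpha
        defect' nonpos upper' lower' lz_bot lw_bot])
  show ?thesis
  proof (rule that[OF G(1)])
    show "(\<lambda>n. ln (norm (zs n)) / real \<delta> ^ n) \<longlonglongrightarrow> G"
      using tendsto_add[OF G(2) ln_rho_div_power_tendsto] unfolding ln_norm_eq_log_coord(2)[OF nz] by simp
    show "(\<lambda>n. ln (norm (ws n)) / real \<delta> ^ n) \<longlonglongrightarrow> \<alpha> * G"
      using tendsto_add[OF G(3) ln_rho_div_power_tendsto] unfolding ln_norm_eq_log_coord(1) by simp
  qed
qed

lemma ereal_log_limits:
  obtains g where "(\<lambda>n. elog (norm (zs n)) / ereal (real \<delta> ^ n)) \<longlonglongrightarrow> g"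
    "(\<lambda>n. elog (norm (ws n)) / ereal (real \<delta> ^ n)) \<longlonglongrightarrow> ereal \<alpha> * g"
proof -
  have elog_div: "elog (norm x) / ereal (real \<delta> ^ n) = ereal (ln (norm x) / real \<delta> ^ n)"
    if "x \<noteq> 0" for x :: complex and n
    using that delta_gt_1 unfolding elog_def by simp
  show ?thesis
  proof (cases "\<exists>n0. zs n0 = 0")
    case True
    then obtain n0 where "zs n0 = 0" by blast
    have "\<forall>\<^sub>F n in sequentially. elog (norm (zs n)) / ereal (real \<delta> ^ n) = -\<infinity>"
      unfolding eventually_sequentially
      using zs_stays_zero[OF \<open>zs n0 = 0\<close>] delta_gt_1 by (auto simp: elog_def divide_ereal_def)
    then have "(\<lambda>n. elog (norm (zs n)) / ereal (real \<delta> ^ n)) \<longlonglongrightarrow> -\<infinity>"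
      by (rule tendsto_eventually)
    moreover have "(\<lambda>n. elog (norm (ws n)) / ereal (real \<delta> ^ n)) \<longlonglongrightarrow> -\<infinity>"
      using ws_log_tendsto_bot_if_zs_zero[OF \<open>zs n0 = 0\<close>]
        ereal_tendsto_simps2(3)[of "\<lambda>n. ln (norm (ws n)) / real \<delta> ^ n" sequentially]
      unfolding elog_div[OF ws_nonzero] by (simp add: comp_def)
    ultimately show ?thesis
      using that[of "-\<infinity>"] alpha_pos by simp
  next
    case False
    then obtain G where "(\<lambda>n. ln (norm (zs n)) / real \<delta> ^ n) \<longlonglongrightarrow> G"
      "(\<lambda>n. ln (norm (ws n)) / real \<delta> ^ n) \<longlonglongrightarrow> \<alpha> * G"
      using log_limits_if_zs_nonzero by blast
    then show ?thesis
      using that[of "ereal G"] False ws_nonzero unfolding elog_div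
      by (simp add: elog_div)
  qed
qed

end

lemma dominant_monomial_bounds:
  fixes a :: complex and h :: "complex \<Rightarrow> complex"
  assumes a: "a \<noteq> 0" and \<rho>: "0 < \<rho>" and h: "continuous_on (cball 0 \<rho>) h"
  obtains r where "0 < r" "r \<le> \<rho>"
    "\<And>x. norm x \<le> r \<Longrightarrow> norm a / 2 * norm x ^ \<delta> \<le> norm (a * x ^ \<delta> + x ^ (\<delta> + 1) * h x) \<and>
      norm (a * x ^ \<delta> + x ^ (\<delta> + 1) * h x) \<le> 3 * norm a / 2 * norm x ^ \<delta>"
proof -
  obtain H where H: "0 < H" "\<And>x. x \<in> cball 0 \<rho> \<Longrightarrow> norm (h x) \<le> H"
    using compact_imp_bounded[OF compact_continuous_image[OF h compact_cball]]
    unfolding bounded_pos by auto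
  define r where "r = min \<rho> (norm a / (2 * H))"
  have r: "0 < r" "r \<le> \<rho>" "r * H \<le> norm a / 2"
    unfolding r_def using \<rho> H a by (auto simp: min_def field_simps)
  have "norm a / 2 * norm x ^ \<delta> \<le> norm (a * x ^ \<delta> + x ^ (\<delta> + 1) * h x) \<and>
      norm (a * x ^ \<delta> + x ^ (\<delta> + 1) * h x) \<le> 3 * norm a / 2 * norm x ^ \<delta>" if x: "norm x \<le> r" for x
  proof -
    have "norm (x * h x) \<le> r * H"
      using x r H(2)[of x] by (auto simp: norm_mult intro: mult_mono)
    then have small: "norm (x * h x) \<le> norm a / 2"
      using r by linarith
    have "a * x ^ \<delta> + x ^ (\<delta> + 1) * h x = x ^ \<delta> * (a + x * h x)"
      by (simp add: algebra_simps)
    then have eq: "norm (a * x ^ \<delta> + x ^ (\<delta> + 1) * h x) = norm (a + x * h x) * norm x ^ \<delta>"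
      by (simp add: norm_mult norm_power)
    have "norm a / 2 \<le> norm (a + x * h x)" "norm (a + x * h x) \<le> 3 * norm a / 2"
      using small norm_triangle_ineq[of a "x * h x"] norm_diff_ineq[of a "x * h x"] by auto
    then show ?thesis
      unfolding eq by (intro conjI mult_right_mono) auto
  qed
  then show ?thesis using r that by blast
qed

lemma fst_skew_iterate: "fst ((skew p q ^^ n) (z, w)) = (p ^^ n) z"
  by (induction n) (auto simp: skew_def split: prod.splits)

lemma skew_iterate_Suc:
  "(skew p q ^^ Suc n) x = (p (fst ((skew p q ^^ n) x)), q (fst ((skew p q ^^ n) x)) (snd ((skew p q ^^ n) x)))"
  by (simp add: skew_def split: prod.splits)

lemma orbit_in_basin0_minus_Ew:
  assumes "(z, w) \<in> basin0 D p q - Ew D p q"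
  shows "fst ((skew p q ^^ n) (z, w)) \<in> D" "snd ((skew p q ^^ n) (z, w)) \<noteq> 0"
    and "(\<lambda>n. fst ((skew p q ^^ n) (z, w))) \<longlonglongrightarrow> 0" "(\<lambda>n. snd ((skew p q ^^ n) (z, w))) \<longlonglongrightarrow> 0"
proof -
  have lim: "(\<lambda>n. (skew p q ^^ n) (z, w)) \<longlonglongrightarrow> (0, 0)" and D: "\<And>n. fst ((skew p q ^^ n) (z, w)) \<in> D"
    using assms unfolding basin0_def by auto
  show "fst ((skew p q ^^ n) (z, w)) \<in> D" by (rule D)
  show "snd ((skew p q ^^ n) (z, w)) \<noteq> 0"
    using assms D unfolding basin0_def Ew_def by blast
  show "(\<lambda>n. fst ((skew p q ^^ n) (z, w))) \<longlonglongrightarrow> 0" "(\<lambda>n. snd ((skew p q ^^ n) (z, w))) \<longlonglongrightarrow> 0"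
    using tendsto_fst[OF lim] tendsto_snd[OF lim] by simp_all
qed

lemma skew_orbit_of_skew_product:
  assumes "newton_last_edge b \<delta> s nv mv"
    and \<rho>: "0 < \<rho>" "cball 0 \<rho> \<subseteq> D" and r: "0 < r" "r \<le> \<rho>" and "0 < c1"
    and p_bounds: "\<And>x. norm x \<le> r \<Longrightarrow> c1 * norm x ^ \<delta> \<le> norm (p x) \<and> norm (p x) \<le> c2 * norm x ^ \<delta>"
    and q_summ: "\<forall>z\<in>D. \<forall>w. (\<lambda>(i, j). norm (b i j * z ^ i * w ^ j)) summable_on UNIV"
    and q_def: "\<forall>z\<in>D. \<forall>w. q z w = (\<Sum>\<^sub>\<infinity>(i, j). b i j * z ^ i * w ^ j)"
    and zw: "(z, w) \<in> basin0 D p q - Ew D p q"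
  shows "skew_orbit b \<delta> s nv mv \<rho> r c1 c2
    (\<lambda>n. fst ((skew p q ^^ n) (z, w))) (\<lambda>n. snd ((skew p q ^^ n) (z, w)))"
proof (intro skew_orbit.intro[OF assms(1)] skew_orbit_axioms.intro)
  note orbit = orbit_in_basin0_minus_Ew[OF zw]
  have "of_real \<rho> \<in> D"
    using \<rho> by auto
  then show "(\<lambda>(i, j). norm (b i j) * \<rho> ^ (i + j)) summable_on UNIV"
    using q_summ \<rho>(1) by (intro summable_on_radius_coefficients) auto
  show "(\<lambda>(i, j). norm (b i j * fst ((skew p q ^^ n) (z, w)) ^ i * snd ((skew p q ^^ n) (z, w)) ^ j))
      summable_on UNIV" for n
    using q_summ orbit(1) by blast
  show "snd ((skew p q ^^ Suc n) (z, w)) =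
      (\<Sum>\<^sub>\<infinity>(i, j). b i j * fst ((skew p q ^^ n) (z, w)) ^ i * snd ((skew p q ^^ n) (z, w)) ^ j)" for n
    using q_def orbit(1) unfolding skew_iterate_Suc by simp
  show "c1 * norm (fst ((skew p q ^^ n) (z, w))) ^ \<delta> \<le> norm (fst ((skew p q ^^ Suc n) (z, w))) \<and>
      norm (fst ((skew p q ^^ Suc n) (z, w))) \<le> c2 * norm (fst ((skew p q ^^ n) (z, w))) ^ \<delta>"
    if "norm (fst ((skew p q ^^ n) (z, w))) \<le> r" for n
    using p_bounds[OF that] unfolding skew_iterate_Suc by simp
qed (use \<rho>(1) r(1) \<open>0 < c1\<close> orbit_in_basin0_minus_Ew[OF zw] in auto)

theorem corollary1p8:
  fixes D :: "complex set" and p :: "complex \<Rightarrow> complex"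
    and q :: "complex \<Rightarrow> complex \<Rightarrow> complex" and b :: "nat \<Rightarrow> nat \<Rightarrow> complex"
    and a :: complex and \<delta> s :: nat and nv mv :: "nat \<Rightarrow> nat" and z w :: complex
  assumes dom: "D = UNIV \<or> (\<exists>R>0. D = ball 0 R \<and> compact (closure (basin_p D p))
                                 \<and> closure (basin_p D p) \<subseteq> ball 0 R)"
    and p_holo: "p holomorphic_on D"
    and delta: "\<delta> \<ge> 2" and a_nz: "a \<noteq> 0"
    and p_exp: "\<exists>h. h holomorphic_on D \<and> (\<forall>z\<in>D. p z = a * z ^ \<delta> + z ^ (\<delta> + 1) * h z)"
    and q_summ: "\<forall>z\<in>D. \<forall>w. (\<lambda>(i, j). norm (b i j * z ^ i * w ^ j)) summable_on UNIV"
    and q_def: "\<forall>z\<in>D. \<forall>w. q z w = (\<Sum>\<^sub>\<infinity>(i, j). b i j * z ^ i * w ^ j)"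
    and b00: "b 0 0 = 0" and b01: "b 0 1 = 0"
    and s_gt: "s > 1"
    and vert: "newton_vertices b = (\<lambda>k. (real (nv k), real (mv k))) ` {1..s}"
    and nv_mono: "strict_mono_on {1..s} nv"
    and T_eq: "y_intercept (real (nv (s - 1)), real (mv (s - 1))) (real (nv s), real (mv s)) = real \<delta>"
    and m1: "real \<delta> > real (mv (s - 1))" and m2: "mv (s - 1) > mv s" and m3: "mv s \<ge> 2"
    and zw: "(z, w) \<in> basin0 D p q - Ew D p q"
  shows "(\<lambda>n. elog (cmod (snd ((skew p q ^^ n) (z, w)))) / ereal (real \<delta> ^ n))
           \<longlonglongrightarrow> ereal (real (nv s) / (real \<delta> - real (mv s))) * green_p p \<delta> z"
proof -
  have "open D" "0 \<in> D" using dom by auto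
  then obtain \<rho> where \<rho>: "0 < \<rho>" "cball 0 \<rho> \<subseteq> D"
    using open_contains_cball by blast
  obtain h where h: "h holomorphic_on D" "\<And>x. x \<in> D \<Longrightarrow> p x = a * x ^ \<delta> + x ^ (\<delta> + 1) * h x"
    using p_exp by blast
  have "continuous_on (cball 0 \<rho>) h"
    using holomorphic_on_imp_continuous_on[OF holomorphic_on_subset[OF h(1) \<rho>(2)]] .
  then obtain r where r: "0 < r" "r \<le> \<rho>" and bounds: "\<And>x. norm x \<le> r \<Longrightarrow>
      norm a / 2 * norm x ^ \<delta> \<le> norm (a * x ^ \<delta> + x ^ (\<delta> + 1) * h x) \<and>
      norm (a * x ^ \<delta> + x ^ (\<delta> + 1) * h x) \<le> 3 * norm a / 2 * norm x ^ \<delta>"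
    by (rule dominant_monomial_bounds[where \<delta> = \<delta>, OF a_nz \<rho>(1)]) blast
  have p_bounds: "norm a / 2 * norm x ^ \<delta> \<le> norm (p x) \<and> norm (p x) \<le> 3 * norm a / 2 * norm x ^ \<delta>"
    if "norm x \<le> r" for x
  proof -
    have "x \<in> D" using that r(2) \<rho>(2) by auto
    then show ?thesis using bounds[OF that] h(2) by simp
  qed
  have "newton_last_edge b \<delta> s nv mv"
    by unfold_locales (fact s_gt vert nv_mono T_eq m1 m2 m3)+
  then interpret skew_orbit b \<delta> s nv mv \<rho> r "norm a / 2" "3 * norm a / 2"
      "\<lambda>n. fst ((skew p q ^^ n) (z, w))" "\<lambda>n. snd ((skew p q ^^ n) (z, w))"
    by (rule skew_orbit_of_skew_product[OF _ \<rho> r _ p_bounds q_summ q_def zw]) (use a_nz in simp)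
  obtain g where g: "(\<lambda>n. elog (norm (fst ((skew p q ^^ n) (z, w)))) / ereal (real \<delta> ^ n)) \<longlonglongrightarrow> g"
    "(\<lambda>n. elog (norm (snd ((skew p q ^^ n) (z, w)))) / ereal (real \<delta> ^ n)) \<longlonglongrightarrow> ereal \<alpha> * g"
    by (rule ereal_log_limits)
  have "green_p p \<delta> z = g"
    using g(1) unfolding green_p_def fst_skew_iterate by (rule limI)
  then show ?thesis
    using g(2) unfolding \<alpha>_def by simp
qed

end
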